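(* The monomials $x_1^{p_1}x_2^{p_2}\cdots x_n^{p_n}g$, for non-negative integers $p_1,\ldots,p_n$ and $g\in G$, form a basis of $\mathsf{H}$. Consequently, with the filtration on $\mathsf{H}$ given by $\deg x_i=1$, $\deg g=0$, the natural homomorphism $SV\#_\alpha G\to\operatorname{gr}\mathsf{H}$ is an isomorphism, where $SV$ is the symmetric algebra of $V$.
   Context: Fix integers $n\ge 3$ and $\ell\ge 2$, and let $\zeta$ be a primitive $\ell$-th root of unity. All subscripts are taken modulo $n$. Let $V=\mathbb{C}^n$ with standard basis $x_1,\ldots,x_n$, and let $G$ be the group of all diagonal matrices $g\in SL_n(\mathbb{C})$ with $g^\ell=1$, acting on $V$, $TV$ and $SV$. For $i=1,\ldots,n$ let $g_i\in G$ be given by $g_i(x_i)=\zeta x_i$, $g_i(x_{i+1})=\zeta^{-1}x_{i+1}$, $g_i(x_j)=x_j$ otherwise; $g_1,\ldots,g_{n-1}$ freely generate $G\cong(\mathbb{Z}/\ell\mathbb{Z})^{n-1}$. Define the 2-cocycle $\alpha$ by $\alpha(g_1^{i_1}\cdots g_{n-1}^{i_{n-1}},g_1^{j_1}\cdots g_{n-1}^{j_{n-1}})=\zeta^{-i_1j_2-\cdots-i_{n-2}j_{n-1}}$. For an algebra $E$ with $G$-action, $E\#_\alpha G$ is $E\otimes\mathbb{C}G$ with product $(r\otimes g)(s\otimes h)=\alpha(g,h)\,r\,(g\cdot s)\otimes gh$. Let $t\in\mathbb{C}^n$. $\mathsf{H}$ is the quotient of $TV\#_\alpha G$ by the relations $x_ix_{i+1}-x_{i+1}x_i=t_ig_i$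 for all $i$, and $x_ix_j=x_jx_i$ whenever $|i-j|\notin\{1,n-1\}$. *)

theory Defs
  imports Complex_Main
begin

text \<open>Conventions: indices are 0-based, i.e. the paper's x_1..x_n are x_0..x_(n-1) here,
  and subscripts are taken mod n.  Diagonal matrices are represented by their diagonal
  entries as a function nat => complex (entries at positions >= n are 1).\<close>

type_synonym grp = "nat \<Rightarrow> complex"
type_synonym idx = "nat list \<times> grp"
type_synonym elem = "idx \<Rightarrow> complex"

definition Gset :: "nat \<Rightarrow> nat \<Rightarrow> grp set" where
  "Gset n l = {g. (\<forall>i\<ge>n. g i = 1) \<and> (\<forall>i<n. g i ^ l = 1) \<and> (\<Prod>i<n. g i) = 1}"

definition gone :: grp where "gone = (\<lambda>_. 1)"

definition gmul :: "grp \<Rightarrow> grp \<Rightarrow> grp" where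
  "gmul g h = (\<lambda>i. g i * h i)"

definition gen :: "nat \<Rightarrow> complex \<Rightarrow> nat \<Rightarrow> grp" where
  "gen n \<zeta> i = (\<lambda>m. if m = i then \<zeta> else if m = Suc i mod n then inverse \<zeta> else 1)"

text \<open>g_0^(e 0) * ... * g_(n-2)^(e (n-2)) (the paper's g_1^(i_1) ... g_(n-1)^(i_(n-1)))\<close>
definition gprod :: "nat \<Rightarrow> complex \<Rightarrow> (nat \<Rightarrow> nat) \<Rightarrow> grp" where
  "gprod n \<zeta> e = (\<lambda>m. \<Prod>k<n-1. gen n \<zeta> k m ^ e k)"

definition gexp :: "nat \<Rightarrow> nat \<Rightarrow> complex \<Rightarrow> grp \<Rightarrow> nat \<Rightarrow> nat" where
  "gexp n l \<zeta> g = (THE e. (\<forall>k. e k < l) \<and> (\<forall>k\<ge>n-1. e k = 0) \<and> g = gprod n \<zeta> e)"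

definition alpha :: "nat \<Rightarrow> nat \<Rightarrow> complex \<Rightarrow> grp \<Rightarrow> grp \<Rightarrow> complex" where
  "alpha n l \<zeta> g h = inverse \<zeta> ^ (\<Sum>k<n-2. gexp n l \<zeta> g k * gexp n l \<zeta> h (Suc k))"

text \<open>Elements of TV #_alpha G: finitely supported coefficient functions on the basis
  (w, g) = x_(w!0) ... x_(w!(k-1)) \<otimes> g, with letters < n and g in G.\<close>
definition Alg :: "nat \<Rightarrow> nat \<Rightarrow> elem set" where
  "Alg n l = {a. finite {x. a x \<noteq> 0} \<and>
     (\<forall>w g. a (w, g) \<noteq> 0 \<longrightarrow> set w \<subseteq> {..<n} \<and> g \<in> Gset n l)}"

definition supp :: "elem \<Rightarrow> idx set" where "supp a = {x. a x \<noteq> 0}"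

definition B :: "nat list \<Rightarrow> grp \<Rightarrow> elem" where
  "B w g = (\<lambda>x. if x = (w, g) then 1 else 0)"

definition eadd :: "elem \<Rightarrow> elem \<Rightarrow> elem" where "eadd a b = (\<lambda>x. a x + b x)"
definition esub :: "elem \<Rightarrow> elem \<Rightarrow> elem" where "esub a b = (\<lambda>x. a x - b x)"
definition esmul :: "complex \<Rightarrow> elem \<Rightarrow> elem" where "esmul c a = (\<lambda>x. c * a x)"
definition ezero :: elem where "ezero = (\<lambda>_. 0)"

text \<open>structure constant: (w \<otimes> g)(v \<otimes> h) = alpha(g,h) w (g.v) \<otimes> gh, with g.v = (prod of
  the diagonal entries of g at the letters of v) v\<close>
definition scoef :: "nat \<Rightarrow> nat \<Rightarrow> complex \<Rightarrow> idx \<Rightarrow> idx \<Rightarrow> complex" where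
  "scoef n l \<zeta> x y = alpha n l \<zeta> (snd x) (snd y) * prod_list (map (snd x) (fst y))"

definition emul :: "nat \<Rightarrow> nat \<Rightarrow> complex \<Rightarrow> elem \<Rightarrow> elem \<Rightarrow> elem" where
  "emul n l \<zeta> a b = (\<lambda>z. \<Sum>x\<in>supp a. \<Sum>y\<in>supp b.
      a x * b y * scoef n l \<zeta> x y * (if z = (fst x @ fst y, gmul (snd x) (snd y)) then 1 else 0))"

definition X :: "nat \<Rightarrow> elem" where "X i = B [i] gone"
definition Gel :: "grp \<Rightarrow> elem" where "Gel g = B [] g"

definition Rels :: "nat \<Rightarrow> nat \<Rightarrow> complex \<Rightarrow> (nat \<Rightarrow> complex) \<Rightarrow> elem set" where
  "Rels n l \<zeta> t =
     {esub (esub (emul n l \<zeta> (X i) (X (Suc i mod n))) (emul n l \<zeta> (X (Suc i mod n)) (X i)))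
           (esmul (t i) (Gel (gen n \<zeta> i))) | i. i < n}
   \<union> {esub (emul n l \<zeta> (X i) (X j)) (emul n l \<zeta> (X j) (X i)) | i j.
        i < n \<and> j < n \<and> nat \<bar>int i - int j\<bar> \<notin> {1, n - 1}}"

inductive_set Ideal :: "nat \<Rightarrow> nat \<Rightarrow> complex \<Rightarrow> (nat \<Rightarrow> complex) \<Rightarrow> elem set"
  for n l \<zeta> t where
  gen_rel: "r \<in> Rels n l \<zeta> t \<Longrightarrow> r \<in> Ideal n l \<zeta> t"
| zero: "ezero \<in> Ideal n l \<zeta> t"
| add: "a \<in> Ideal n l \<zeta> t \<Longrightarrow> b \<in> Ideal n l \<zeta> t \<Longrightarrow> eadd a b \<in> Ideal n l \<zeta> t"
| smul: "a \<in> Ideal n l \<zeta> t \<Longrightarrow> esmul c a \<in> Ideal n l \<zeta> t"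
| lmul: "a \<in> Ideal n l \<zeta> t \<Longrightarrow> b \<in> Alg n l \<Longrightarrow> emul n l \<zeta> b a \<in> Ideal n l \<zeta> t"
| rmul: "a \<in> Ideal n l \<zeta> t \<Longrightarrow> b \<in> Alg n l \<Longrightarrow> emul n l \<zeta> a b \<in> Ideal n l \<zeta> t"

definition Mon :: "nat \<Rightarrow> nat \<Rightarrow> ((nat \<Rightarrow> nat) \<times> grp) set" where
  "Mon n l = {(p, g). (\<forall>i\<ge>n. p i = 0) \<and> g \<in> Gset n l}"

definition mono :: "nat \<Rightarrow> (nat \<Rightarrow> nat) \<times> grp \<Rightarrow> elem" where
  "mono n m = B (concat (map (\<lambda>i. replicate (fst m i) i) [0..<n])) (snd m)"

definition lincomb :: "nat \<Rightarrow> ((nat \<Rightarrow> nat) \<times> grp) set \<Rightarrow> ((nat \<Rightarrow> nat) \<times> grp \<Rightarrow> complex) \<Rightarrow> elem" where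
  "lincomb n S c = (\<lambda>x. \<Sum>m\<in>S. c m * mono n m x)"

definition monomials_basis :: "nat \<Rightarrow> nat \<Rightarrow> complex \<Rightarrow> (nat \<Rightarrow> complex) \<Rightarrow> bool" where
  "monomials_basis n l \<zeta> t \<longleftrightarrow>
     (\<forall>a\<in>Alg n l. \<exists>S c. finite S \<and> S \<subseteq> Mon n l \<and> esub a (lincomb n S c) \<in> Ideal n l \<zeta> t)
   \<and> (\<forall>S c. finite S \<and> S \<subseteq> Mon n l \<and> lincomb n S c \<in> Ideal n l \<zeta> t \<longrightarrow> (\<forall>m\<in>S. c m = 0))"

text \<open>Filtration by degree (deg x_i = 1, deg g = 0): preimages in TV #_alpha G of F_d H
  are Fle d + Ideal; F_(d-1) H corresponds to Flt d + Ideal (Flt 0 = 0).\<close>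
definition Fle :: "nat \<Rightarrow> nat \<Rightarrow> nat \<Rightarrow> elem set" where
  "Fle n l d = {a \<in> Alg n l. \<forall>x. a x \<noteq> 0 \<longrightarrow> length (fst x) \<le> d}"
definition Flt :: "nat \<Rightarrow> nat \<Rightarrow> nat \<Rightarrow> elem set" where
  "Flt n l d = {a \<in> Alg n l. \<forall>x. a x \<noteq> 0 \<longrightarrow> length (fst x) < d}"

definition MonDeg :: "nat \<Rightarrow> nat \<Rightarrow> nat \<Rightarrow> ((nat \<Rightarrow> nat) \<times> grp) set" where
  "MonDeg n l d = {m \<in> Mon n l. (\<Sum>i<n. fst m i) = d}"

text \<open>The natural map SV #_alpha G \<rightarrow> gr H sends the basis element x^p \<otimes> g of
  SV_d \<otimes> CG to the class of x_0^(p 0)...x_(n-1)^(p (n-1)) g in F_d H / F_(d-1) H.\<close>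
definition gr_map_iso :: "nat \<Rightarrow> nat \<Rightarrow> complex \<Rightarrow> (nat \<Rightarrow> complex) \<Rightarrow> bool" where
  "gr_map_iso n l \<zeta> t \<longleftrightarrow> (\<forall>d.
     (\<forall>a\<in>Fle n l d. \<exists>S c b. finite S \<and> S \<subseteq> MonDeg n l d \<and> b \<in> Flt n l d \<and>
          esub (esub a (lincomb n S c)) b \<in> Ideal n l \<zeta> t)
   \<and> (\<forall>S c b. finite S \<and> S \<subseteq> MonDeg n l d \<and> b \<in> Flt n l d \<and>
          esub (lincomb n S c) b \<in> Ideal n l \<zeta> t \<longrightarrow> (\<forall>m\<in>S. c m = 0)))"

end

theory Submission
  imports Defs
begin

text \<open>
  Independence of the ordered monomials comes from a representation: on functions of pairs
  \<open>(p, f)\<close> (an exponent vector and a group element) we let \<open>x_j\<close> and \<open>g\<close> act by the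
  transposes of left multiplication on the span of the would-be basis \<open>x^p f\<close>, computed as
  if the monomials were independent.  These operators satisfy the defining relations, so the
  ideal acts by zero, whereas the ordered monomial \<open>x^p g\<close> sends \<open>\<phi>\<close> to a function whose
  value at \<open>(0, 1)\<close> is \<open>\<phi> (p, g)\<close>.

  Spanning is the straightening argument: in \<open>x_j x^p g\<close> the letter \<open>x_j\<close> is swapped with
  the smallest letter of \<open>x^p\<close> below \<open>j\<close>, at the cost of a word of lower degree.  As
  straightening never raises the degree, both statements pass to the associated graded algebra.
\<close>

section \<open>Roots of unity\<close>

locale root_of_unity =
  fixes l :: nat and \<zeta> :: complex
  assumes l_ge_2: "2 \<le> l" and zeta_pow_l: "\<zeta> ^ l = 1"
    and zeta_primitive: "\<forall>k. 0 < k \<and> k < l \<longrightarrow> \<zeta> ^ k \<noteq> 1"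
begin

abbreviation "\<eta> \<equiv> inverse \<zeta>"

lemma zeta_nonzero: "\<zeta> \<noteq> 0"
proof
  assume "\<zeta> = 0"
  hence "\<zeta> ^ l = 0" using l_ge_2 by simp
  thus False using zeta_pow_l by simp
qed

lemma zeta_pow_mod: "\<zeta> ^ k = \<zeta> ^ (k mod l)"
proof -
  have "\<zeta> ^ k = \<zeta> ^ (l * (k div l) + k mod l)" by simp
  also have "\<dots> = \<zeta> ^ (k mod l)" by (simp only: power_add power_mult zeta_pow_l power_one mult_1)
  finally show ?thesis .
qed

lemma zeta_pow_inj: assumes "a < l" "b < l" "\<zeta> ^ a = \<zeta> ^ b" shows "a = b"
proof (rule ccontr)
  have neq: "\<zeta> ^ a \<noteq> \<zeta> ^ b" if "a < b" "b < l" for a b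
  proof
    have "\<zeta> ^ a * \<zeta> ^ (b - a) = \<zeta> ^ b" using that by (simp flip: power_add)
    moreover assume "\<zeta> ^ a = \<zeta> ^ b"
    ultimately have "\<zeta> ^ a * \<zeta> ^ (b - a) = \<zeta> ^ a * 1" by simp
    hence "\<zeta> ^ (b - a) = 1" using zeta_nonzero by simp
    thus False using zeta_primitive that by auto
  qed
  assume "a \<noteq> b"
  thus False using neq[of a b] neq[of b a] assms by (metis linorder_neqE_nat)
qed

lemma root_of_unity_eq_zeta_pow: assumes "w ^ l = 1" shows "\<exists>a<l. w = \<zeta> ^ a"
proof -
  let ?R = "{w::complex. w ^ l = 1}"
  have "(\<zeta> ^ a) ^ l = 1" for a
    by (metis power_mult mult.commute power_one zeta_pow_l)
  hence sub: "(\<lambda>a. \<zeta> ^ a) ` {..<l} \<subseteq> ?R" by auto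
  have "inj_on (\<lambda>a. \<zeta> ^ a) {..<l}" by (auto intro!: inj_onI zeta_pow_inj)
  hence c1: "card ((\<lambda>a. \<zeta> ^ a) ` {..<l}) = l" by (simp add: card_image)
  have fin: "finite ?R" and c2: "card ?R \<le> l"
    using l_ge_2 by (auto intro: finite_roots_unity card_roots_unity)
  have "(\<lambda>a. \<zeta> ^ a) ` {..<l} = ?R"
    using card_subset_eq[OF fin sub] c1 c2 card_mono[OF fin sub] by simp
  thus ?thesis using assms by auto
qed

lemma eta_pow_l: "\<eta> ^ l = 1" using zeta_pow_l by (simp add: power_inverse)

lemma eta_pow_mod: "\<eta> ^ k = \<eta> ^ (k mod l)"
  by (metis power_inverse zeta_pow_mod)

lemma eta_pow_nonzero: "\<eta> ^ k \<noteq> 0" using zeta_nonzero by simp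

lemma zeta_pow_eta_pow: "\<zeta> ^ a * \<eta> ^ a = 1"
  using zeta_nonzero by (simp add: power_inverse[symmetric] field_simps)

lemma eta_pow_l_minus_1: "\<eta> ^ (l - 1) = \<zeta>"
proof -
  have "\<zeta> ^ (l - 1) * \<zeta> = 1" using zeta_pow_l l_ge_2 by (metis Suc_diff_1 less_le_trans numeral_2_eq_2 power_Suc2 zero_less_Suc)
  hence "\<zeta> ^ (l - 1) = \<eta>" using zeta_nonzero by (simp add: field_simps)
  thus ?thesis by (metis inverse_inverse_eq power_inverse)
qed

definition qint :: "nat \<Rightarrow> complex" where "qint k = (\<Sum>a<k. \<zeta> ^ a)"
definition qint' :: "nat \<Rightarrow> complex" where "qint' k = (\<Sum>a<k. \<eta> ^ a)"

lemma qint_0[simp]: "qint 0 = 0" and qint'_0[simp]: "qint' 0 = 0" by (simp_all add: qint_def qint'_def)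

lemma qint_Suc: "qint (Suc k) = qint k + \<zeta> ^ k" by (simp add: qint_def)
lemma qint'_Suc: "qint' (Suc k) = qint' k + \<eta> ^ k" by (simp add: qint'_def)
lemma qint'_eq_qint: "qint' (Suc k) = \<eta> ^ k * qint (Suc k)"
proof (induction k)
  case (Suc k)
  have "qint' (Suc (Suc k)) = \<eta> ^ k * qint (Suc k) + \<eta> ^ Suc k" using Suc qint'_Suc by simp
  also have "\<dots> = \<eta> ^ Suc k * (\<zeta> * qint (Suc k) + 1)" using zeta_nonzero by (simp add: field_simps)
  also have "\<zeta> * qint (Suc k) + 1 = qint (Suc (Suc k))"
  proof -
    have "\<zeta> * qint (Suc k) = (\<Sum>a<Suc k. \<zeta> ^ Suc a)" by (simp add: qint_def sum_distrib_left distrib_left)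
    thus ?thesis unfolding qint_def by (simp only: sum.lessThan_Suc_shift[of _ "Suc k"]) simp
  qed
  finally show ?case .
qed (simp add: qint_def qint'_def)

lemma qint_identity: "qint p * qint' (p - 1) = \<zeta> * qint' p * qint (p - 1)"
proof (cases p)
  case (Suc k)
  show ?thesis
  proof (cases k)
    case (Suc m)
    have zi: "\<zeta> ^ x * \<eta> ^ x = 1" for x by (rule zeta_pow_eta_pow)
    have h1: "qint (Suc (Suc m)) = \<zeta> ^ Suc m * qint' (Suc (Suc m))"
      unfolding qint'_eq_qint[of "Suc m"] mult.assoc[symmetric] zi by simp
    have h2: "qint (Suc m) = \<zeta> ^ m * qint' (Suc m)"
      unfolding qint'_eq_qint[of m] mult.assoc[symmetric] zi by simp
    show ?thesis using \<open>p = Suc k\<close> Suc by (simp add: h1 h2 mult_ac)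
  qed (simp add: \<open>p = Suc k\<close>)
qed simp

end

section \<open>The group \<open>G\<close> and the cocycle\<close>

locale diag_group = root_of_unity +
  fixes n :: nat
  assumes n_ge_3: "3 \<le> n"
begin

abbreviation "G \<equiv> Gset n l"
abbreviation "coords \<equiv> gexp n l \<zeta>"
abbreviation "\<alpha> \<equiv> alpha n l \<zeta>"
abbreviation "\<gamma> \<equiv> gen n \<zeta>"

definition Exps :: "(nat \<Rightarrow> nat) set" where
  "Exps = {e. (\<forall>k. e k < l) \<and> (\<forall>k\<ge>n-1. e k = 0)}"

lemma gen_apply: "k < n - 1 \<Longrightarrow> \<gamma> k m = (if m = k then \<zeta> else if m = Suc k then \<eta> else 1)"
  unfolding gen_def by auto

lemma gen_last_apply: "\<gamma> (n - 1) m = (if m = n - 1 then \<zeta> else if m = 0 then \<eta> else 1)"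
  unfolding gen_def using n_ge_3 by auto

lemma gprod_apply: "gprod n \<zeta> e m = (if m < n - 1 then \<zeta> ^ e m else 1) *
   (if 0 < m \<and> m < n then \<eta> ^ e (m - 1) else 1)"
proof -
  have "gprod n \<zeta> e m = (\<Prod>k<n-1. (if k = m then \<zeta> ^ e k else 1) * (if k = m - 1 \<and> 0 < m then \<eta> ^ e k else 1))"
    unfolding gprod_def by (intro prod.cong refl) (auto simp: gen_apply)
  also have "\<dots> = (\<Prod>k<n-1. (if k = m then \<zeta> ^ e k else 1)) * (\<Prod>k<n-1. (if k = m - 1 \<and> 0 < m then \<eta> ^ e k else 1))"
    by (rule prod.distrib)
  also have "(\<Prod>k<n-1. (if k = m then \<zeta> ^ e k else 1)) = (if m < n - 1 then \<zeta> ^ e m else 1)"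
    by (simp add: prod.delta)
  also have "(\<Prod>k<n-1. (if k = m - 1 \<and> 0 < m then \<eta> ^ e k else 1)) = (if 0 < m \<and> m < n then \<eta> ^ e (m - 1) else 1)"
    using n_ge_3 by (cases "0 < m") (auto simp: prod.delta)
  finally show ?thesis .
qed

lemma gprod_beyond: "n \<le> m \<Longrightarrow> gprod n \<zeta> e m = 1" by (auto simp: gprod_apply)

lemma gprod_inj: assumes "e \<in> Exps" "e' \<in> Exps" "gprod n \<zeta> e = gprod n \<zeta> e'" shows "e = e'"
proof
  fix k
  show "e k = e' k"
  proof (cases "k < n - 1")
    case False thus ?thesis using assms(1,2) unfolding Exps_def by auto
  next
    case True
    thus ?thesis
    proof (induction k)
      case 0
      have "gprod n \<zeta> e 0 = gprod n \<zeta> e' 0" using assms(3) by simp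
      hence "\<zeta> ^ e 0 = \<zeta> ^ e' 0" using 0 by (simp add: gprod_apply)
      thus ?case using assms(1,2) unfolding Exps_def by (intro zeta_pow_inj) auto
    next
      case (Suc k)
      have "e k = e' k" using Suc by simp
      moreover have "\<zeta> ^ e (Suc k) * \<eta> ^ e k = \<zeta> ^ e' (Suc k) * \<eta> ^ e' k"
        using fun_cong[OF assms(3), of "Suc k"] Suc.prems by (simp add: gprod_apply less_diff_conv)
      ultimately have "\<zeta> ^ e (Suc k) = \<zeta> ^ e' (Suc k)" using eta_pow_nonzero by (metis mult_right_cancel)
      thus ?case using assms(1,2) unfolding Exps_def by (intro zeta_pow_inj) auto
    qed
  qed
qed

lemma gexp_gprod: assumes "e \<in> Exps" "g = gprod n \<zeta> e" shows "coords g = e"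
  unfolding gexp_def
proof (rule the_equality)
  show "(\<forall>k. e k < l) \<and> (\<forall>k\<ge>n - 1. e k = 0) \<and> g = gprod n \<zeta> e" using assms unfolding Exps_def by auto
  fix e' assume "(\<forall>k. e' k < l) \<and> (\<forall>k\<ge>n - 1. e' k = 0) \<and> g = gprod n \<zeta> e'"
  thus "e' = e" using assms gprod_inj unfolding Exps_def by auto
qed

lemma Gset_prod_last: assumes "g \<in> G" shows "g (n - 1) * (\<Prod>i<n-1. g i) = 1"
proof -
  have "{..<n} = insert (n - 1) {..<n-1}" using n_ge_3 by auto
  thus ?thesis using assms by (simp add: Gset_def)
qed

lemma gprod_in_Gset: assumes "e \<in> Exps" shows "gprod n \<zeta> e \<in> G"
proof -
  let ?g = "gprod n \<zeta> e"
  have pw: "?g m ^ l = 1" for m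
  proof -
    have "(\<zeta> ^ a) ^ l = 1" for a by (metis power_mult mult.commute power_one zeta_pow_l)
    moreover have "(\<eta> ^ a) ^ l = 1" for a by (metis power_mult mult.commute power_one eta_pow_l)
    ultimately show ?thesis by (simp add: gprod_apply power_mult_distrib)
  qed
  have telescope: "(\<Prod>m<N. ?g m) = (if N = 0 then 1 else \<zeta> ^ e (N - 1))" if "N \<le> n - 1" for N
    using that
  proof (induction N)
    case (Suc N)
    thus ?case using n_ge_3 zeta_pow_eta_pow by (auto simp: gprod_apply mult.commute mult.left_commute)
  qed simp
  have "(\<Prod>m<n-1. ?g m) = \<zeta> ^ e (n - 2)" using telescope[of "n - 1"] n_ge_3
    by (simp add: numeral_2_eq_2)
  moreover have "?g (n - 1) = \<eta> ^ e (n - 2)" using n_ge_3 assms unfolding Exps_def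
    by (simp add: gprod_apply) (metis Suc_1 diff_diff_left numeral_2_eq_2 plus_1_eq_Suc)
  moreover have "{..<n} = insert (n-1) {..<n-1}" using n_ge_3 by auto
  ultimately have "(\<Prod>m<n. ?g m) = 1" using zeta_pow_eta_pow by (simp add: mult.commute)
  thus ?thesis using pw unfolding Gset_def by (auto simp: gprod_beyond)
qed

text \<open>The exponents are the partial sums of the exponents of the diagonal entries.\<close>

lemma Gset_eq_gprod: assumes "g \<in> G" shows "\<exists>e\<in>Exps. g = gprod n \<zeta> e"
proof -
  have "\<forall>i. \<exists>a<l. g i = \<zeta> ^ a"
  proof
    fix i show "\<exists>a<l. g i = \<zeta> ^ a"
      using assms root_of_unity_eq_zeta_pow l_ge_2 unfolding Gset_def
      by (cases "i < n") (auto intro: exI[of _ 0])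
  qed
  then obtain a where a: "\<And>i. a i < l" "\<And>i. g i = \<zeta> ^ a i" by metis
  define S where "S k = (\<Sum>i\<le>k. a i)" for k
  define e where "e k = (if k < n - 1 then S k mod l else 0)" for k
  have eE: "e \<in> Exps" unfolding Exps_def e_def using l_ge_2 by auto
  have "g m = gprod n \<zeta> e m" for m
  proof -
    consider "m = 0" | "0 < m" "m < n - 1" | "m = n - 1" | "m \<ge> n" by linarith
    thus ?thesis
    proof cases
      case 1 thus ?thesis using n_ge_3 a(2)[of 0] by (simp add: gprod_apply e_def S_def zeta_pow_mod[symmetric])
    next
      case 2
      have "gprod n \<zeta> e m = \<zeta> ^ S m * \<eta> ^ S (m - 1)" using 2
        by (auto simp: gprod_apply e_def zeta_pow_mod[symmetric] eta_pow_mod[symmetric])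
      also have "S m = S (m - 1) + a m" using 2 unfolding S_def
        by (metis Suc_diff_1 sum.atMost_Suc)
      finally have "gprod n \<zeta> e m = \<zeta> ^ a m * (\<zeta> ^ S (m - 1) * \<eta> ^ S (m - 1))"
        by (simp add: power_add mult_ac)
      thus ?thesis using a(2) zeta_pow_eta_pow by simp
    next
      case 3
      have m: "m - 1 = n - 2" "m - 1 < n - 1" "\<not> m < n - 1" "0 < m" "m < n" using 3 n_ge_3 by auto
      have "gprod n \<zeta> e m = \<eta> ^ S (n - 2)" unfolding gprod_apply using m
        by (simp add: e_def eta_pow_mod[symmetric])
      moreover have "(\<Prod>i<n-1. g i) = \<zeta> ^ S (n - 2)"
      proof -
        have "{..<n-1} = {..n-2}" using n_ge_3 by auto
        thus ?thesis unfolding S_def a(2) power_sum by simp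
      qed
      hence "g (n - 1) = \<eta> ^ S (n - 2)" using Gset_prod_last[OF assms] zeta_nonzero
        by (simp add: power_inverse field_simps)
      ultimately show ?thesis using 3 by simp
    next
      case 4 thus ?thesis using assms by (simp add: gprod_beyond Gset_def)
    qed
  qed
  thus ?thesis using eE by auto
qed

lemma assumes "g \<in> G"
  shows coords_in_Exps: "coords g \<in> Exps" and gprod_coords: "g = gprod n \<zeta> (coords g)"
  using Gset_eq_gprod[OF assms] gexp_gprod by auto

lemma coords_beyond: "g \<in> G \<Longrightarrow> n - 1 \<le> k \<Longrightarrow> coords g k = 0"
  using coords_in_Exps unfolding Exps_def by auto

lemma Gset_apply_coords: "g \<in> G \<Longrightarrow> g m = (if m < n - 1 then \<zeta> ^ coords g m else 1) *
   (if 0 < m \<and> m < n then \<eta> ^ coords g (m - 1) else 1)"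
  using gprod_coords gprod_apply by metis

lemma finite_Exps: "finite Exps"
proof -
  have "Exps \<subseteq> {e. \<forall>x. (x \<in> {..<n-1} \<longrightarrow> e x \<in> {..<l}) \<and> (x \<notin> {..<n-1} \<longrightarrow> e x = 0)}"
    unfolding Exps_def by auto
  thus ?thesis by (rule finite_subset) (intro finite_set_of_finite_funs; simp)
qed

lemma finite_Gset: "finite G"
proof -
  have "G \<subseteq> gprod n \<zeta> ` Exps" using Gset_eq_gprod by blast
  thus ?thesis using finite_Exps finite_subset by blast
qed

lemma gmul_gprod: "gmul (gprod n \<zeta> e) (gprod n \<zeta> e') = gprod n \<zeta> (\<lambda>k. (e k + e' k) mod l)"
proof
  fix m
  have a: "\<zeta> ^ ((e m + e' m) mod l) = \<zeta> ^ e m * \<zeta> ^ e' m" by (simp add: zeta_pow_mod[symmetric] power_add)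
  have b: "\<eta> ^ ((e (m-1) + e' (m-1)) mod l) = \<eta> ^ e (m-1) * \<eta> ^ e' (m-1)" by (simp add: eta_pow_mod[symmetric] power_add)
  show "gmul (gprod n \<zeta> e) (gprod n \<zeta> e') m = gprod n \<zeta> (\<lambda>k. (e k + e' k) mod l) m"
    unfolding gmul_def gprod_apply a b by (auto simp: mult_ac)
qed

lemma gmul_in_Gset: assumes "g \<in> G" "h \<in> G" shows "gmul g h \<in> G"
  and coords_gmul: "coords (gmul g h) = (\<lambda>k. (coords g k + coords h k) mod l)"
proof -
  let ?e = "(\<lambda>k. (coords g k + coords h k) mod l)"
  have E: "?e \<in> Exps" using coords_in_Exps assms l_ge_2 unfolding Exps_def by auto
  have eq: "gmul g h = gprod n \<zeta> ?e" using gmul_gprod gprod_coords assms by metis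
  show "gmul g h \<in> G" using eq gprod_in_Gset[OF E] by simp
  show "coords (gmul g h) = ?e" using gexp_gprod[OF E eq] .
qed

lemma gone_in_Gset: "gone \<in> G" and coords_gone: "coords gone = (\<lambda>_. 0)"
proof -
  have E: "(\<lambda>_. 0) \<in> Exps" unfolding Exps_def using l_ge_2 by auto
  have eq: "gone = gprod n \<zeta> (\<lambda>_. 0)" by (auto simp: gone_def gprod_apply)
  show "gone \<in> G" using gprod_in_Gset[OF E] eq by simp
  show "coords gone = (\<lambda>_. 0)" using gexp_gprod[OF E eq] .
qed

lemma gmul_assoc: "gmul (gmul a b) c = gmul a (gmul b c)" by (simp add: gmul_def mult.assoc)
lemma gmul_left_commute: "gmul a (gmul b f) = gmul b (gmul a f)" by (simp add: gmul_def mult_ac)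
lemma gmul_gone[simp]: "gmul gone a = a" "gmul a gone = a" by (simp_all add: gmul_def gone_def)

lemma gen_in_Gset: "a < n \<Longrightarrow> \<gamma> a \<in> G"
proof -
  assume a: "a < n"
  have b: "Suc a mod n \<noteq> a" "Suc a mod n < n" using n_ge_3 a
    by (cases "Suc a = n"; auto)+
  have pw: "\<gamma> a m ^ l = 1" for m using zeta_pow_l eta_pow_l unfolding gen_def by auto
  have "(\<Prod>m<n. \<gamma> a m) = (\<Prod>m<n. (if m = a then \<zeta> else 1) * (if m = Suc a mod n then \<eta> else 1))"
    unfolding gen_def by (intro prod.cong) (use b in auto)
  also have "\<dots> = \<zeta> * \<eta>" using a b by (simp add: prod.distrib prod.delta)
  finally have "(\<Prod>m<n. \<gamma> a m) = 1" using zeta_nonzero by simp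
  moreover have "m \<ge> n \<Longrightarrow> \<gamma> a m = 1" for m using a b unfolding gen_def by (auto dest: leD)
  ultimately show ?thesis using pw unfolding Gset_def by auto
qed

lemma coords_gen: "a < n - 1 \<Longrightarrow> coords (\<gamma> a) = (\<lambda>k. if k = a then 1 else 0)"
proof -
  assume a: "a < n - 1"
  have E: "(\<lambda>k. if k = a then 1 else 0) \<in> Exps" unfolding Exps_def using a l_ge_2 by auto
  have "\<gamma> a = gprod n \<zeta> (\<lambda>k. if k = a then 1 else 0)"
  proof
    fix m show "\<gamma> a m = gprod n \<zeta> (\<lambda>k. if k = a then 1 else 0) m"
      using a unfolding gprod_apply gen_apply[OF a] by auto
  qed
  thus ?thesis using gexp_gprod[OF E] by simp
qed

text \<open>The last generator is the product of the inverses of the free generators.\<close>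

lemma coords_gen_last: "coords (\<gamma> (n - 1)) = (\<lambda>k. if k < n - 1 then l - 1 else 0)"
proof -
  have E: "(\<lambda>k. if k < n - 1 then l - 1 else 0) \<in> Exps" unfolding Exps_def using l_ge_2 by auto
  have zeta_pow: "\<zeta> ^ (l - 1) = \<eta>"
    by (metis eta_pow_l_minus_1 inverse_inverse_eq power_inverse)
  have "\<gamma> (n - 1) = gprod n \<zeta> (\<lambda>k. if k < n - 1 then l - 1 else 0)"
  proof
    fix m show "\<gamma> (n - 1) m = gprod n \<zeta> (\<lambda>k. if k < n - 1 then l - 1 else 0) m"
      unfolding gprod_apply gen_last_apply using n_ge_3 zeta_pow eta_pow_l_minus_1 zeta_pow_eta_pow[of "l - 1"]
      by (auto simp: zeta_nonzero)
  qed
  thus ?thesis using gexp_gprod[OF E] by simp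
qed

lemma alpha_prod: "\<alpha> g h = (\<Prod>k<n-2. \<eta> ^ (coords g k * coords h (Suc k)))"
  unfolding alpha_def by (simp add: power_sum)

lemma alpha_gmul_left: assumes "g \<in> G" "h \<in> G"
  shows "\<alpha> (gmul g h) f = \<alpha> g f * \<alpha> h f"
proof -
  have "\<eta> ^ (((coords g k + coords h k) mod l) * coords f (Suc k))
     = \<eta> ^ (coords g k * coords f (Suc k)) * \<eta> ^ (coords h k * coords f (Suc k))" for k
    by (metis eta_pow_mod power_mult distrib_right power_add)
  thus ?thesis unfolding alpha_prod coords_gmul[OF assms] by (simp add: prod.distrib)
qed

lemma alpha_gmul_right: assumes "g \<in> G" "h \<in> G"
  shows "\<alpha> f (gmul g h) = \<alpha> f g * \<alpha> f h"
proof -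
  have "\<eta> ^ (coords f k * ((coords g (Suc k) + coords h (Suc k)) mod l))
     = \<eta> ^ (coords f k * coords g (Suc k)) * \<eta> ^ (coords f k * coords h (Suc k))" for k
    by (metis eta_pow_mod power_mult mult.commute distrib_right power_add)
  thus ?thesis unfolding alpha_prod coords_gmul[OF assms] by (simp add: prod.distrib)
qed

lemma alpha_gone_left[simp]: "\<alpha> gone f = 1"
  and alpha_gone_right[simp]: "\<alpha> f gone = 1"
  unfolding alpha_def coords_gone by simp_all

text \<open>In the twisted group algebra this is the rule \<open>g \<gamma>_a = g(x_a) g(x_(a+1)) \<gamma>_a g\<close>.\<close>

lemma alpha_gen_swap_below_last: assumes g: "g \<in> G" and a: "a < n - 1"
  shows "\<alpha> g (\<gamma> a) = g a * g (Suc a mod n) * \<alpha> (\<gamma> a) g"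
proof -
  let ?e = "coords g"
  have e0: "?e (n - 1) = 0" using coords_beyond[OF g] by simp
  have A1: "\<alpha> g (\<gamma> a) = (if 0 < a then \<eta> ^ ?e (a - 1) else 1)"
  proof -
    have "\<alpha> g (\<gamma> a) = (\<Prod>k<n-2. if k = a - 1 \<and> 0 < a then \<eta> ^ ?e k else 1)"
      unfolding alpha_prod coords_gen[OF a] by (intro prod.cong) auto
    also have "\<dots> = (if 0 < a then \<eta> ^ ?e (a - 1) else 1)"
      using a by (cases "0 < a") (auto simp: prod.delta)
    finally show ?thesis .
  qed
  have A2: "\<alpha> (\<gamma> a) g = \<eta> ^ ?e (Suc a)"
  proof -
    have "\<alpha> (\<gamma> a) g = (\<Prod>k<n-2. if k = a then \<eta> ^ ?e (Suc k) else 1)"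
      unfolding alpha_prod coords_gen[OF a] by (intro prod.cong) auto
    also have "\<dots> = \<eta> ^ ?e (Suc a)"
    proof (cases "a < n - 2")
      case False
      hence "Suc a = n - 1" using a by linarith
      thus ?thesis using False e0 by (simp add: prod.delta)
    qed (simp add: prod.delta)
    finally show ?thesis .
  qed
  have ga: "g a = \<zeta> ^ ?e a * (if 0 < a then \<eta> ^ ?e (a - 1) else 1)"
    using Gset_apply_coords[OF g, of a] a by auto
  have gs: "g (Suc a mod n) = \<zeta> ^ ?e (Suc a) * \<eta> ^ ?e a"
  proof (cases "Suc a < n - 1")
    case False
    hence "Suc a = n - 1" using a by linarith
    hence "Suc a mod n = Suc a" "?e (Suc a) = 0" "\<not> Suc a < n - 1" "Suc a < n" using e0 n_ge_3 by auto
    thus ?thesis using Gset_apply_coords[OF g, of "Suc a"] by simp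
  qed (use Gset_apply_coords[OF g, of "Suc a"] a in auto)
  have "\<zeta> ^ x * (\<zeta> ^ y * (\<eta> ^ x * \<eta> ^ y)) = 1" for x y
  proof -
    have "\<zeta> ^ x * (\<zeta> ^ y * (\<eta> ^ x * \<eta> ^ y)) = (\<zeta> ^ x * \<eta> ^ x) * (\<zeta> ^ y * \<eta> ^ y)"
      by (simp add: mult_ac)
    thus ?thesis using zeta_pow_eta_pow by simp
  qed
  thus ?thesis unfolding A1 A2 ga gs by (auto simp: mult_ac)
qed

lemma alpha_gen_swap_last: assumes g: "g \<in> G"
  shows "\<alpha> g (\<gamma> (n - 1)) = g (n - 1) * g 0 * \<alpha> (\<gamma> (n - 1)) g"
proof -
  let ?e = "coords g"
  have zz: "\<eta> ^ (x * (l - 1)) = \<zeta> ^ x" "\<eta> ^ ((l - 1) * x) = \<zeta> ^ x" for x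
    by (metis eta_pow_l_minus_1 mult.commute power_mult)+
  have A1: "\<alpha> g (\<gamma> (n - 1)) = (\<Prod>k<n-2. \<zeta> ^ ?e k)"
    unfolding alpha_prod coords_gen_last by (intro prod.cong) (auto simp: zz[simplified])
  have A2: "\<alpha> (\<gamma> (n - 1)) g = (\<Prod>k<n-2. \<zeta> ^ ?e (Suc k))"
    unfolding alpha_prod coords_gen_last by (intro prod.cong) (auto simp: zz[simplified])
  have g1: "g (n - 1) = \<eta> ^ ?e (n - 2)" using Gset_apply_coords[OF g, of "n - 1"] n_ge_3
    by (simp add: numeral_2_eq_2)
  have g0: "g 0 = \<zeta> ^ ?e 0" using Gset_apply_coords[OF g, of 0] n_ge_3 by simp
  obtain m where m: "n - 2 = m" by simp
  have P1: "(\<Prod>k<Suc m. \<zeta> ^ ?e k) = (\<Prod>k<m. \<zeta> ^ ?e k) * \<zeta> ^ ?e m" by simp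
  have P2: "(\<Prod>k<Suc m. \<zeta> ^ ?e k) = \<zeta> ^ ?e 0 * (\<Prod>k<m. \<zeta> ^ ?e (Suc k))" by (rule prod.lessThan_Suc_shift)
  have "(\<Prod>k<m. \<zeta> ^ ?e k) = ((\<Prod>k<m. \<zeta> ^ ?e k) * \<zeta> ^ ?e m) * \<eta> ^ ?e m"
    using zeta_pow_eta_pow[of "?e m"] by (simp add: mult.assoc)
  also have "\<dots> = \<eta> ^ ?e m * \<zeta> ^ ?e 0 * (\<Prod>k<m. \<zeta> ^ ?e (Suc k))"
    using P1 P2 by (simp add: mult_ac)
  finally show ?thesis unfolding A1 A2 g1 g0 m .
qed

lemma alpha_gen_swap: assumes "g \<in> G" "a < n"
  shows "\<alpha> g (\<gamma> a) = g a * g (Suc a mod n) * \<alpha> (\<gamma> a) g"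
proof (cases "a < n - 1")
  case False
  hence "a = n - 1" using assms by simp
  moreover have "Suc (n - 1) mod n = 0" using n_ge_3 by simp
  ultimately show ?thesis using alpha_gen_swap_last[OF assms(1)] by simp
qed (use alpha_gen_swap_below_last[OF assms(1)] in simp)

lemma alpha_gen_gen: "a < n - 1 \<Longrightarrow> b < n - 1 \<Longrightarrow> \<alpha> (\<gamma> a) (\<gamma> b) = (if b = Suc a then \<eta> else 1)"
proof -
  assume a: "a < n - 1" and b: "b < n - 1"
  have "\<alpha> (\<gamma> a) (\<gamma> b) = (\<Prod>k<n-2. if k = a \<and> b = Suc a then \<eta> else 1)"
    unfolding alpha_prod coords_gen[OF a] coords_gen[OF b] by (intro prod.cong) auto
  also have "\<dots> = (if b = Suc a then \<eta> else 1)" using a b by (cases "b = Suc a") (auto simp: prod.delta)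
  finally show ?thesis .
qed

lemma alpha_gen_gen_last: "a < n - 1 \<Longrightarrow> \<alpha> (\<gamma> a) (\<gamma> (n - 1)) = (if a < n - 2 then \<zeta> else 1)"
proof -
  assume a: "a < n - 1"
  have "\<alpha> (\<gamma> a) (\<gamma> (n - 1)) = (\<Prod>k<n-2. if k = a then \<zeta> else 1)"
    unfolding alpha_prod coords_gen[OF a] coords_gen_last by (intro prod.cong) (auto simp: eta_pow_l_minus_1[simplified])
  also have "\<dots> = (if a < n - 2 then \<zeta> else 1)" by (simp add: prod.delta)
  finally show ?thesis .
qed

lemma alpha_gen_last_gen: "b < n - 1 \<Longrightarrow> \<alpha> (\<gamma> (n - 1)) (\<gamma> b) = (if 0 < b then \<zeta> else 1)"
proof -
  assume b: "b < n - 1"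
  have "\<alpha> (\<gamma> (n - 1)) (\<gamma> b) = (\<Prod>k<n-2. if k = b - 1 \<and> 0 < b then \<zeta> else 1)"
    unfolding alpha_prod coords_gen[OF b] coords_gen_last by (intro prod.cong) (auto simp: eta_pow_l_minus_1[simplified])
  also have "\<dots> = (if 0 < b then \<zeta> else 1)" using b by (cases "0 < b") (auto simp: prod.delta)
  finally show ?thesis .
qed

end

section \<open>Exponent vectors and ordered monomials\<close>

definition inc :: "nat \<Rightarrow> (nat \<Rightarrow> nat) \<Rightarrow> nat \<Rightarrow> nat" where "inc j p = p(j := Suc (p j))"
definition dec :: "nat \<Rightarrow> (nat \<Rightarrow> nat) \<Rightarrow> nat \<Rightarrow> nat" where "dec j p = p(j := p j - 1)"

lemma inc_apply[simp]: "inc i p i = Suc (p i)" "i \<noteq> j \<Longrightarrow> inc i p j = p j"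
  and dec_apply[simp]: "dec i p i = p i - 1" "i \<noteq> j \<Longrightarrow> dec i p j = p j"
  by (auto simp: inc_def dec_def)

lemma inc_commute: "i \<noteq> j \<Longrightarrow> inc i (inc j p) = inc j (inc i p)"
  and dec_inc_commute: "i \<noteq> j \<Longrightarrow> dec i (inc j p) = inc j (dec i p)"
  and dec_commute: "dec i (dec j p) = dec j (dec i p)"
  and dec_inc: "dec i (inc i p) = p"
  and inc_dec: "0 < p i \<Longrightarrow> inc i (dec i p) = p"
  by (auto simp: inc_def dec_def fun_eq_iff)

lemma sum_lessThan_inc: "j < N \<Longrightarrow> (\<Sum>i<N. inc j p i) = Suc (\<Sum>i<N. p i)"
  unfolding inc_def by (simp add: sum.remove[of "{..<N}" j] sum.cong[of _ _ "\<lambda>i. (p(j := Suc (p j))) i" p])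

lemma sum_lessThan_dec: "j < N \<Longrightarrow> 0 < p j \<Longrightarrow> Suc (\<Sum>i<N. dec j p i) = (\<Sum>i<N. p i)"
  using sum_lessThan_inc[of j N "dec j p"] by (simp add: inc_dec)

lemma count_list_replicate: "count_list (replicate k x) y = (if x = y then k else 0)"
  by (induction k) auto

lemma concat_replicate_props: "sorted (concat (map (\<lambda>i. replicate (p i) i) [0..<b])) \<and>
   set (concat (map (\<lambda>i. replicate (p i) i) [0..<b])) \<subseteq> {..<b} \<and>
   (\<forall>i. count_list (concat (map (\<lambda>i. replicate (p i) i) [0..<b])) i = (if i < b then p i else 0))"
proof (induction b)
  case (Suc b)
  thus ?case by (auto simp: sorted_append count_list_replicate)
qed simp

lemma length_concat_replicate: "length (concat (map (\<lambda>i. replicate (p i) i) [0..<b])) = (\<Sum>i<b. p i)"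
  by (induction b) auto

context diag_group
begin

definition word :: "(nat \<Rightarrow> nat) \<Rightarrow> nat list" where
  "word p = concat (map (\<lambda>i. replicate (p i) i) [0..<n])"

definition deg :: "(nat \<Rightarrow> nat) \<Rightarrow> nat" where "deg p = (\<Sum>i<n. p i)"

definition MonLe :: "nat \<Rightarrow> ((nat \<Rightarrow> nat) \<times> grp) set" where
  "MonLe D = {m \<in> Mon n l. deg (fst m) \<le> D}"

lemma mono_eq_B_word: "mono n m = B (word (fst m)) (snd m)" by (simp add: mono_def word_def)

lemma sorted_word: "sorted (word p)"
  and set_word_subset: "set (word p) \<subseteq> {..<n}"
  and count_list_word: "count_list (word p) i = (if i < n then p i else 0)"
  using concat_replicate_props[of p n] unfolding word_def by auto

lemma length_word: "length (word p) = deg p"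
  unfolding word_def deg_def by (rule length_concat_replicate)

lemma word_split: assumes "j < n" "\<forall>i<j. p i = 0"
  shows "word p = replicate (p j) j @ concat (map (\<lambda>i. replicate (p i) i) [Suc j..<n])"
proof -
  have "[0..<n] = [0..<j] @ j # [Suc j..<n]" using assms(1)
    using upt_add_eq_append[of 0 j "n - j"] upt_conv_Cons[of j n] by simp
  moreover have "concat (map (\<lambda>i. replicate (p i) i) [0..<j]) = []" using assms(2) by auto
  ultimately show ?thesis unfolding word_def by simp
qed

lemma word_inc: assumes "j < n" "\<forall>i<j. p i = 0" shows "word (inc j p) = j # word p"
proof -
  have "\<forall>i<j. inc j p i = 0" using assms by simp
  hence "word (inc j p) = replicate (inc j p j) j @ concat (map (\<lambda>i. replicate (inc j p i) i) [Suc j..<n])"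
    by (rule word_split[OF assms(1)])
  also have "map (\<lambda>i. replicate (inc j p i) i) [Suc j..<n] = map (\<lambda>i. replicate (p i) i) [Suc j..<n]"
    by (intro map_cong refl) simp
  finally show ?thesis using word_split[OF assms] by simp
qed

lemma word_dec: assumes "j < n" "\<forall>i<j. p i = 0" "0 < p j" shows "word p = j # word (dec j p)"
  using word_inc[of j "dec j p"] assms by (simp add: inc_dec)

lemma deg_inc: "j < n \<Longrightarrow> deg (inc j p) = Suc (deg p)"
  unfolding deg_def by (rule sum_lessThan_inc)

lemma deg_dec: "j < n \<Longrightarrow> 0 < p j \<Longrightarrow> Suc (deg (dec j p)) = deg p"
  unfolding deg_def by (rule sum_lessThan_dec)

lemma Mon_inc: "(p, g) \<in> Mon n l \<Longrightarrow> j < n \<Longrightarrow> (inc j p, g) \<in> Mon n l"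
  by (auto simp: Mon_def inc_def)

lemma Mon_dec: "(p, g) \<in> Mon n l \<Longrightarrow> g' \<in> G \<Longrightarrow> (dec j p, g') \<in> Mon n l"
  by (auto simp: Mon_def dec_def)

lemma finite_MonLe: "finite (MonLe D)"
proof -
  let ?P = "{p. \<forall>x. (x \<in> {..<n} \<longrightarrow> p x \<in> {..D}) \<and> (x \<notin> {..<n} \<longrightarrow> p x = 0)}"
  have "finite ?P" by (intro finite_set_of_finite_funs) auto
  moreover have "MonLe D \<subseteq> ?P \<times> G"
  proof
    fix m assume m: "m \<in> MonLe D"
    obtain p g where mp: "m = (p, g)" by fastforce
    have "p x \<le> D" if "x < n" for x
    proof -
      have "p x \<le> deg p" unfolding deg_def using that by (intro member_le_sum) auto
      thus ?thesis using m mp by (simp add: MonLe_def)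
    qed
    thus "m \<in> ?P \<times> G" using m mp by (auto simp: MonLe_def Mon_def)
  qed
  ultimately show ?thesis using finite_Gset by (meson finite_SigmaI finite_subset)
qed

lemma finite_MonDeg: "finite (MonDeg n l d)"
proof -
  have "MonDeg n l d \<subseteq> MonLe d" by (auto simp: MonDeg_def MonLe_def deg_def)
  thus ?thesis using finite_MonLe finite_subset by blast
qed

definition chi :: "grp \<Rightarrow> (nat \<Rightarrow> nat) \<Rightarrow> complex" where
  "chi g p = (\<Prod>i<n. g i ^ p i)"

lemma chi_inc: assumes "j < n" shows "chi g (inc j p) = g j * chi g p"
proof -
  have "chi g (inc j p) = (\<Prod>i<n. (if i = j then g j else 1) * g i ^ p i)"
    unfolding chi_def inc_def by (intro prod.cong) auto
  also have "\<dots> = g j * chi g p" using assms by (simp add: prod.distrib chi_def prod.delta)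
  finally show ?thesis .
qed

lemma chi_dec: "k < n \<Longrightarrow> 0 < p k \<Longrightarrow> g k * chi g (dec k p) = chi g p"
  using chi_inc[of k g "dec k p"] by (simp add: inc_dec)

lemma chi_gmul: "chi (gmul g h) p = chi g p * chi h p"
  unfolding chi_def gmul_def by (simp add: power_mult_distrib prod.distrib)

lemma chi_gen: assumes a: "a < n" shows "chi (\<gamma> a) p = \<zeta> ^ p a * \<eta> ^ p (Suc a mod n)"
proof -
  have b: "Suc a mod n \<noteq> a" "Suc a mod n < n" using n_ge_3 a by (cases "Suc a = n"; auto)+
  have "chi (\<gamma> a) p = (\<Prod>m<n. (if m = a then \<zeta> ^ p a else 1) * (if m = Suc a mod n then \<eta> ^ p (Suc a mod n) else 1))"
    unfolding chi_def gen_def by (intro prod.cong) (use b in auto)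
  also have "\<dots> = \<zeta> ^ p a * \<eta> ^ p (Suc a mod n)" using a b by (simp add: prod.distrib prod.delta)
  finally show ?thesis .
qed

lemma chi_zero: "chi g (\<lambda>_. 0) = 1" by (simp add: chi_def)

text \<open>Commuting \<open>g\<close> past a correction term of \<open>x_j\<close> (which lowers the exponent \<open>k\<close> and
  multiplies by \<open>\<gamma>_a\<close>) costs the same scalar \<open>c = g(x_j)\<close> as commuting it past \<open>x_j\<close>.\<close>

lemma chi_dec_alpha_gen:
  assumes "g \<in> G" "f \<in> G" "a < n" "k < n" "0 < p k" "g a * g (Suc a mod n) = g k * c"
  shows "chi g (dec k p) * \<alpha> g (gmul (\<gamma> a) f) = c * chi g p * \<alpha> g f * \<alpha> (\<gamma> a) g"
proof -
  have "\<alpha> g (gmul (\<gamma> a) f) = \<alpha> g (\<gamma> a) * \<alpha> g f"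
    using alpha_gmul_right gen_in_Gset assms(2,3) by blast
  also have "\<alpha> g (\<gamma> a) = g k * c * \<alpha> (\<gamma> a) g" using alpha_gen_swap assms(1,3,6) by simp
  finally have "chi g (dec k p) * \<alpha> g (gmul (\<gamma> a) f) = (g k * chi g (dec k p)) * c * \<alpha> (\<gamma> a) g * \<alpha> g f"
    by (simp add: mult_ac)
  thus ?thesis using chi_dec assms(4,5) by (simp add: mult_ac)
qed

end

section \<open>The twisted tensor algebra \<open>TV #\<^sub>\<alpha> G\<close>\<close>

lemma supp_sum_subset: "supp (\<lambda>x. \<Sum>m\<in>S. c m * b m x) \<subseteq> (\<Union>m\<in>S. supp (b m))"
proof
  fix x assume "x \<in> supp (\<lambda>x. \<Sum>m\<in>S. c m * b m x)"
  hence "(\<Sum>m\<in>S. c m * b m x) \<noteq> 0" by (simp add: supp_def)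
  then obtain m where "m \<in> S" "b m x \<noteq> 0" by (metis (mono_tags, lifting) mult_zero_right sum.neutral)
  thus "x \<in> (\<Union>m\<in>S. supp (b m))" by (auto simp: supp_def)
qed

lemma supp_B: "supp (B w g) = {(w, g)}" by (auto simp: supp_def B_def)

lemma esmul_1: "esmul 1 a = a" by (simp add: esmul_def)

context diag_group
begin

abbreviation "mul \<equiv> emul n l \<zeta>"
abbreviation "\<A> \<equiv> Alg n l"
abbreviation "sc \<equiv> scoef n l \<zeta>"

definition idx_mul :: "idx \<Rightarrow> idx \<Rightarrow> idx" where "idx_mul x y = (fst x @ fst y, gmul (snd x) (snd y))"

lemma mul_apply: "mul a b w = (\<Sum>x\<in>supp a. \<Sum>y\<in>supp b. a x * b y * sc x y * (if w = idx_mul x y then 1 else 0))"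
  unfolding emul_def idx_mul_def by simp

lemma mul_apply_superset: assumes "finite F" "finite H" "supp a \<subseteq> F" "supp b \<subseteq> H"
  shows "mul a b w = (\<Sum>x\<in>F. \<Sum>y\<in>H. a x * b y * sc x y * (if w = idx_mul x y then 1 else 0))"
proof -
  have "mul a b w = (\<Sum>x\<in>F. \<Sum>y\<in>supp b. a x * b y * sc x y * (if w = idx_mul x y then 1 else 0))"
    unfolding mul_apply by (rule sum.mono_neutral_left) (use assms in \<open>auto simp: supp_def\<close>)
  also have "\<dots> = (\<Sum>x\<in>F. \<Sum>y\<in>H. a x * b y * sc x y * (if w = idx_mul x y then 1 else 0))"
    by (intro sum.cong refl sum.mono_neutral_left) (use assms in \<open>auto simp: supp_def\<close>)
  finally show ?thesis .
qed

lemma supp_mul: "supp (mul a b) \<subseteq> (\<lambda>(x, y). idx_mul x y) ` (supp a \<times> supp b)"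
proof
  fix w assume "w \<in> supp (mul a b)"
  hence "mul a b w \<noteq> 0" by (simp add: supp_def)
  have "\<exists>x\<in>supp a. \<exists>y\<in>supp b. w = idx_mul x y"
  proof (rule ccontr)
    assume "\<not> ?thesis"
    hence "mul a b w = 0" unfolding mul_apply by (intro sum.neutral ballI) auto
    thus False using \<open>mul a b w \<noteq> 0\<close> by simp
  qed
  thus "w \<in> (\<lambda>(x, y). idx_mul x y) ` (supp a \<times> supp b)" by auto
qed

lemma Alg_iff: "a \<in> \<A> \<longleftrightarrow> finite (supp a) \<and> (\<forall>x\<in>supp a. set (fst x) \<subseteq> {..<n} \<and> snd x \<in> G)"
  unfolding Alg_def supp_def by auto

lemma finite_supp_Alg: "a \<in> \<A> \<Longrightarrow> finite (supp a)" by (simp add: Alg_iff)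

lemma mul_Alg: assumes "a \<in> \<A>" "b \<in> \<A>" shows "mul a b \<in> \<A>"
proof -
  have "finite ((\<lambda>(x, y). idx_mul x y) ` (supp a \<times> supp b))" using assms by (simp add: Alg_iff)
  hence "finite (supp (mul a b))" using finite_subset[OF supp_mul] by blast
  moreover have "set (fst w) \<subseteq> {..<n} \<and> snd w \<in> G" if w: "w \<in> supp (mul a b)" for w
  proof -
    obtain x y where "x \<in> supp a" "y \<in> supp b" "w = idx_mul x y" using subsetD[OF supp_mul w] by auto
    thus ?thesis using assms gmul_in_Gset unfolding Alg_iff idx_mul_def by auto
  qed
  ultimately show ?thesis unfolding Alg_iff by blast
qed

lemma B_Alg: "set w \<subseteq> {..<n} \<Longrightarrow> g \<in> G \<Longrightarrow> B w g \<in> \<A>"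
  by (simp add: Alg_iff supp_B)

lemma eadd_Alg: assumes "a \<in> \<A>" "b \<in> \<A>" shows "eadd a b \<in> \<A>"
proof -
  have "supp (eadd a b) \<subseteq> supp a \<union> supp b" by (auto simp: supp_def eadd_def)
  thus ?thesis using assms unfolding Alg_iff by (meson UnE finite_UnI finite_subset subsetD)
qed

lemma esmul_Alg: assumes "a \<in> \<A>" shows "esmul c a \<in> \<A>"
proof -
  have "supp (esmul c a) \<subseteq> supp a" by (auto simp: supp_def esmul_def)
  thus ?thesis using assms unfolding Alg_iff by (meson finite_subset subsetD)
qed

lemma esub_Alg: assumes "a \<in> \<A>" "b \<in> \<A>" shows "esub a b \<in> \<A>"
proof -
  have "supp (esub a b) \<subseteq> supp a \<union> supp b" by (auto simp: supp_def esub_def)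
  thus ?thesis using assms unfolding Alg_iff by (meson UnE finite_UnI finite_subset subsetD)
qed

lemma ezero_Alg: "ezero \<in> \<A>" by (simp add: Alg_iff supp_def ezero_def)

lemma X_Alg: "j < n \<Longrightarrow> X j \<in> \<A>" unfolding X_def using gone_in_Gset by (simp add: B_Alg)

lemma Gel_Alg: "g \<in> G \<Longrightarrow> Gel g \<in> \<A>" unfolding Gel_def by (simp add: B_Alg)

lemma mono_Alg: "m \<in> Mon n l \<Longrightarrow> mono n m \<in> \<A>"
  using set_word_subset by (auto simp: mono_eq_B_word Mon_def intro!: B_Alg)

lemma scoef_apply: "sc (w, g) (v, h) = \<alpha> g h * prod_list (map g v)" by (simp add: scoef_def)

lemma mul_B: "mul (B w g) (B v h) = esmul (sc (w, g) (v, h)) (B (w @ v) (gmul g h))"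
proof
  fix x show "mul (B w g) (B v h) x = esmul (sc (w, g) (v, h)) (B (w @ v) (gmul g h)) x"
    unfolding mul_apply supp_B by (auto simp: esmul_def B_def idx_mul_def)
qed

lemma mul_B_gone: "mul (B w gone) (B v g) = B (w @ v) g"
proof -
  have "prod_list (map (\<lambda>_. 1::complex) v) = 1" by (induction v) auto
  thus ?thesis by (simp add: mul_B scoef_apply esmul_1) (simp add: gone_def esmul_1)
qed

lemma mul_X_B: "mul (X j) (B w g) = B (j # w) g"
  unfolding X_def mul_B_gone by simp

lemma mul_X_X_B: "mul (mul (X a) (X b)) (B w g) = B (a # b # w) g"
  unfolding X_def mul_B_gone by simp

lemma mul_Gel_B: "mul (Gel h) (B v g) = esmul (\<alpha> h g * prod_list (map h v)) (B v (gmul h g))"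
  unfolding Gel_def mul_B scoef_apply by simp

lemma mul_esub_left: assumes "finite (supp a)" "finite (supp b)" "finite (supp c)"
  shows "mul (esub a b) c = esub (mul a c) (mul b c)"
proof
  fix w
  let ?F = "supp a \<union> supp b"
  have "supp (esub a b) \<subseteq> ?F" by (auto simp: supp_def esub_def)
  thus "mul (esub a b) c w = esub (mul a c) (mul b c) w"
    using mul_apply_superset[of ?F "supp c" "esub a b" c w] mul_apply_superset[of ?F "supp c" a c w]
      mul_apply_superset[of ?F "supp c" b c w] assms
    by (simp add: esub_def sum_subtractf[symmetric] left_diff_distrib)
qed

lemma mul_esub_right: assumes "finite (supp a)" "finite (supp b)" "finite (supp c)"
  shows "mul c (esub a b) = esub (mul c a) (mul c b)"
proof
  fix w
  let ?F = "supp a \<union> supp b"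
  have "supp (esub a b) \<subseteq> ?F" by (auto simp: supp_def esub_def)
  thus "mul c (esub a b) w = esub (mul c a) (mul c b) w"
    using mul_apply_superset[of "supp c" ?F c "esub a b" w] mul_apply_superset[of "supp c" ?F c a w]
      mul_apply_superset[of "supp c" ?F c b w] assms
    by (simp add: esub_def sum_subtractf[symmetric] left_diff_distrib right_diff_distrib)
qed

lemma mul_esmul_left: "mul (esmul k a) c = esmul k (mul a c)"
proof (cases "k = 0")
  case True thus ?thesis by (auto simp: esmul_def emul_def supp_def)
next
  case False
  hence "supp (esmul k a) = supp a" by (auto simp: supp_def esmul_def)
  thus ?thesis by (auto simp: esmul_def emul_def sum_distrib_left mult_ac)
qed

lemma mul_sum_right: assumes "finite S" "\<forall>m\<in>S. finite (supp (b m))" "finite (supp a)"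
  shows "mul a (\<lambda>x. \<Sum>m\<in>S. k m * b m x) = (\<lambda>w. \<Sum>m\<in>S. k m * mul a (b m) w)"
proof
  fix w
  let ?H = "\<Union>m\<in>S. supp (b m)"
  have fH: "finite ?H" using assms by auto
  have e1: "mul a (\<lambda>x. \<Sum>m\<in>S. k m * b m x) w = (\<Sum>x\<in>supp a. \<Sum>y\<in>?H. a x * (\<Sum>m\<in>S. k m * b m y) * sc x y * (if w = idx_mul x y then 1 else 0))"
    by (rule mul_apply_superset[OF assms(3) fH]) (use supp_sum_subset[of k b S] in auto)
  have e2: "mul a (b m) w = (\<Sum>x\<in>supp a. \<Sum>y\<in>?H. a x * b m y * sc x y * (if w = idx_mul x y then 1 else 0))" if "m \<in> S" for m
    by (rule mul_apply_superset[OF assms(3) fH]) (use that in auto)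
  show "mul a (\<lambda>x. \<Sum>m\<in>S. k m * b m x) w = (\<Sum>m\<in>S. k m * mul a (b m) w)"
    unfolding e1 using e2
    by (simp add: sum_distrib_left sum_distrib_right sum.swap[of _ S] mult_ac cong: sum.cong)
qed

lemma lincomb_supp: assumes "x \<in> supp (lincomb n S c)" shows "\<exists>m\<in>S. x = (word (fst m), snd m)"
proof -
  obtain m where "m \<in> S" "x \<in> supp (mono n m)"
    using assms supp_sum_subset[of c "mono n" S] unfolding lincomb_def by blast
  thus ?thesis by (auto simp: mono_eq_B_word supp_B)
qed

lemma lincomb_Alg: assumes "finite S" "S \<subseteq> Mon n l" shows "lincomb n S c \<in> \<A>"
proof -
  have "supp (lincomb n S c) \<subseteq> (\<lambda>m. (word (fst m), snd m)) ` S" using lincomb_supp by blast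
  hence "finite (supp (lincomb n S c))" using assms(1) finite_subset by blast
  moreover have "snd m \<in> G" if "m \<in> S" for m using that assms(2) by (auto simp: Mon_def)
  ultimately show ?thesis unfolding Alg_iff using lincomb_supp set_word_subset by (metis fst_conv snd_conv)
qed

end

section \<open>A representation on functions of exponent vectors and group elements\<close>

locale pbw_algebra = diag_group +
  fixes t :: "nat \<Rightarrow> complex"
begin

type_synonym vec = "(nat \<Rightarrow> nat) \<times> grp \<Rightarrow> complex"

definition corr_prev :: "nat \<Rightarrow> (nat \<Rightarrow> nat) \<Rightarrow> grp \<Rightarrow> complex" where
  "corr_prev j p f = (if 0 < j then - t (j - 1) * qint (p (j - 1)) * \<eta> ^ p j * \<alpha> (\<gamma> (j - 1)) f else 0)"

definition corr_wrap :: "nat \<Rightarrow> (nat \<Rightarrow> nat) \<Rightarrow> grp \<Rightarrow> complex" where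
  "corr_wrap j p f = (if j = n - 1 then t (n - 1) * qint' (p 0) * \<zeta> ^ p (n - 1) * \<alpha> (\<gamma> (n - 1)) f else 0)"

text \<open>\<open>act_G g\<close> and \<open>act_X j\<close> are the transposes of left multiplication by \<open>g\<close> and \<open>x_j\<close>
  on the span of the ordered monomials \<open>x^p f\<close>.  Bringing \<open>x_j\<close> into its place only meets
  the power of \<open>x_(j-1)\<close> and, for \<open>j = n - 1\<close>, the power of \<open>x_0\<close>; the defining relations
  turn each of these encounters into the correction term \<open>corr_prev\<close> resp. \<open>corr_wrap\<close>.\<close>

definition act_G :: "grp \<Rightarrow> vec \<Rightarrow> vec" where
  "act_G g \<phi> = (\<lambda>(p, f). if f \<in> G then chi g p * \<alpha> g f * \<phi> (p, gmul g f) else 0)"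

definition act_X :: "nat \<Rightarrow> vec \<Rightarrow> vec" where
  "act_X j \<phi> = (\<lambda>(p, f). if f \<in> G then
      \<phi> (inc j p, f)
    + corr_prev j p f * \<phi> (dec (j - 1) p, gmul (\<gamma> (j - 1)) f)
    + corr_wrap j p f * \<phi> (dec 0 p, gmul (\<gamma> (n - 1)) f)
    else 0)"

lemma act_G_apply: "act_G g \<phi> (p, f) = (if f \<in> G then chi g p * \<alpha> g f * \<phi> (p, gmul g f) else 0)"
  by (simp add: act_G_def)

lemma act_X_apply: "act_X j \<phi> (p, f) = (if f \<in> G then
      \<phi> (inc j p, f)
    + corr_prev j p f * \<phi> (dec (j - 1) p, gmul (\<gamma> (j - 1)) f)
    + corr_wrap j p f * \<phi> (dec 0 p, gmul (\<gamma> (n - 1)) f)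
    else 0)"
  by (simp add: act_X_def)

lemma act_X_expand: "f \<in> G \<Longrightarrow> act_X j \<phi> (p, f) = \<phi> (inc j p, f)
   + corr_prev j p f * \<phi> (dec (j - 1) p, gmul (\<gamma> (j - 1)) f)
   + corr_wrap j p f * \<phi> (dec 0 p, gmul (\<gamma> (n - 1)) f)"
  by (simp add: act_X_apply)

lemma corr_prev_0[simp]: "corr_prev 0 p f = 0" by (simp add: corr_prev_def)
lemma corr_wrap_not_last[simp]: "j \<noteq> n - 1 \<Longrightarrow> corr_wrap j p f = 0" by (simp add: corr_wrap_def)

lemma act_G_act_G: assumes "g \<in> G" "h \<in> G" shows "act_G h (act_G g \<phi>) = (\<lambda>s. \<alpha> g h * act_G (gmul g h) \<phi> s)"
proof (rule ext, clarify)
  fix p f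
  show "act_G h (act_G g \<phi>) (p, f) = \<alpha> g h * act_G (gmul g h) \<phi> (p, f)"
  proof (cases "f \<in> G")
    case True
    have "\<alpha> g (gmul h f) = \<alpha> g h * \<alpha> g f" using alpha_gmul_right assms True by blast
    moreover have "\<alpha> (gmul g h) f = \<alpha> g f * \<alpha> h f" using alpha_gmul_left assms by blast
    ultimately show ?thesis using True gmul_in_Gset[OF assms(2) True]
      by (simp add: act_G_apply gmul_assoc chi_gmul mult_ac)
  qed (simp add: act_G_apply)
qed

lemma act_X_act_G: assumes g: "g \<in> G" and j: "j < n"
  shows "act_X j (act_G g \<phi>) = (\<lambda>s. g j * act_G g (act_X j \<phi>) s)"
proof (rule ext, clarify)
  fix p f
  show "act_X j (act_G g \<phi>) (p, f) = g j * act_G g (act_X j \<phi>) (p, f)"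
  proof (cases "f \<in> G")
    case f: True
    have gf: "gmul g f \<in> G" using gmul_in_Gset g f by blast
    have twist: "act_G g \<phi> (dec k p, gmul (\<gamma> a) f)
        = g j * (chi g p * \<alpha> g f) * \<alpha> (\<gamma> a) g * \<phi> (dec k p, gmul (\<gamma> a) (gmul g f))"
      if "a < n" "k < n" "0 < p k" "g a * g (Suc a mod n) = g k * g j" for a k
      using chi_dec_alpha_gen[of g f a k p "g j", OF g f that] gmul_in_Gset[OF gen_in_Gset[OF \<open>a < n\<close>] f]
      by (simp add: act_G_apply gmul_left_commute mult_ac)
    have T1: "act_G g \<phi> (inc j p, f) = g j * (chi g p * \<alpha> g f * \<phi> (inc j p, gmul g f))"
      using f j by (simp add: act_G_apply chi_inc)
    have T2: "corr_prev j p f * act_G g \<phi> (dec (j - 1) p, gmul (\<gamma> (j - 1)) f)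
       = g j * (chi g p * \<alpha> g f * (corr_prev j p (gmul g f) * \<phi> (dec (j - 1) p, gmul (\<gamma> (j - 1)) (gmul g f))))"
    proof (cases "0 < j \<and> 0 < p (j - 1)")
      case True
      hence "Suc (j - 1) mod n = j" using j by simp
      hence "act_G g \<phi> (dec (j - 1) p, gmul (\<gamma> (j - 1)) f)
          = g j * (chi g p * \<alpha> g f) * \<alpha> (\<gamma> (j - 1)) g * \<phi> (dec (j - 1) p, gmul (\<gamma> (j - 1)) (gmul g f))"
        using True j by (intro twist) (auto simp: mult.commute)
      moreover have "\<alpha> (\<gamma> (j - 1)) (gmul g f) = \<alpha> (\<gamma> (j - 1)) g * \<alpha> (\<gamma> (j - 1)) f"
        using alpha_gmul_right g f by blast
      ultimately show ?thesis by (simp add: corr_prev_def mult_ac)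
    qed (auto simp: corr_prev_def)
    have T3: "corr_wrap j p f * act_G g \<phi> (dec 0 p, gmul (\<gamma> (n - 1)) f)
       = g j * (chi g p * \<alpha> g f * (corr_wrap j p (gmul g f) * \<phi> (dec 0 p, gmul (\<gamma> (n - 1)) (gmul g f))))"
    proof (cases "j = n - 1 \<and> 0 < p 0")
      case True
      hence "act_G g \<phi> (dec 0 p, gmul (\<gamma> (n - 1)) f)
          = g j * (chi g p * \<alpha> g f) * \<alpha> (\<gamma> (n - 1)) g * \<phi> (dec 0 p, gmul (\<gamma> (n - 1)) (gmul g f))"
        using n_ge_3 by (intro twist) (auto simp: mult.commute)
      moreover have "\<alpha> (\<gamma> (n - 1)) (gmul g f) = \<alpha> (\<gamma> (n - 1)) g * \<alpha> (\<gamma> (n - 1)) f"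
        using alpha_gmul_right g f by blast
      ultimately show ?thesis using True by (simp add: corr_wrap_def mult_ac)
    qed (auto simp: corr_wrap_def)
    have "act_G g (act_X j \<phi>) (p, f) = chi g p * \<alpha> g f * (\<phi> (inc j p, gmul g f)
        + corr_prev j p (gmul g f) * \<phi> (dec (j - 1) p, gmul (\<gamma> (j - 1)) (gmul g f))
        + corr_wrap j p (gmul g f) * \<phi> (dec 0 p, gmul (\<gamma> (n - 1)) (gmul g f)))"
      using f gf by (simp add: act_G_apply act_X_expand)
    thus ?thesis by (simp only: act_X_expand[OF f] T1 T2 T3 distrib_left)
  qed (simp add: act_X_apply act_G_apply)
qed

lemma act_X_act_X_expand: assumes f: "f \<in> G" and i: "i < n" shows "act_X i (act_X j \<phi>) (p, f) =
    \<phi> (inc j (inc i p), f)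
  + corr_prev j (inc i p) f * \<phi> (dec (j - 1) (inc i p), gmul (\<gamma> (j - 1)) f)
  + corr_wrap j (inc i p) f * \<phi> (dec 0 (inc i p), gmul (\<gamma> (n - 1)) f)
  + corr_prev i p f * (\<phi> (inc j (dec (i - 1) p), gmul (\<gamma> (i - 1)) f)
     + corr_prev j (dec (i - 1) p) (gmul (\<gamma> (i - 1)) f) * \<phi> (dec (j - 1) (dec (i - 1) p), gmul (\<gamma> (j - 1)) (gmul (\<gamma> (i - 1)) f))
     + corr_wrap j (dec (i - 1) p) (gmul (\<gamma> (i - 1)) f) * \<phi> (dec 0 (dec (i - 1) p), gmul (\<gamma> (n - 1)) (gmul (\<gamma> (i - 1)) f)))
  + corr_wrap i p f * (\<phi> (inc j (dec 0 p), gmul (\<gamma> (n - 1)) f)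
     + corr_prev j (dec 0 p) (gmul (\<gamma> (n - 1)) f) * \<phi> (dec (j - 1) (dec 0 p), gmul (\<gamma> (j - 1)) (gmul (\<gamma> (n - 1)) f))
     + corr_wrap j (dec 0 p) (gmul (\<gamma> (n - 1)) f) * \<phi> (dec 0 (dec 0 p), gmul (\<gamma> (n - 1)) (gmul (\<gamma> (n - 1)) f)))"
proof -
  have "gmul (\<gamma> (i - 1)) f \<in> G" "gmul (\<gamma> (n - 1)) f \<in> G"
    using gmul_in_Gset gen_in_Gset f i n_ge_3 by auto
  thus ?thesis using f by (simp add: act_X_expand algebra_simps)
qed

lemma n_arith: "n - 1 \<noteq> 0" "n - 2 \<noteq> 0" "n - 1 < n" "0 < n - 1" "n - 2 < n - 1" "0 < n"
  using n_ge_3 by auto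

lemma corr_prev_step:
  "corr_prev (Suc i) p f * \<phi> (inc i (dec i p), g) - corr_prev (Suc i) (inc i p) f * \<phi> (p, g)
     = t i * (\<zeta> ^ p i * \<eta> ^ p (Suc i) * \<alpha> (\<gamma> i) f * \<phi> (p, g))"
proof (cases "p i")
  case 0 thus ?thesis by (simp add: corr_prev_def qint_def)
next
  case (Suc m) thus ?thesis by (simp add: corr_prev_def inc_dec qint_Suc algebra_simps)
qed

lemma corr_wrap_step:
  "corr_wrap (n - 1) (inc 0 p) f * \<phi> (p, g) - corr_wrap (n - 1) p f * \<phi> (inc 0 (dec 0 p), g)
     = t (n - 1) * (\<zeta> ^ p (n - 1) * \<eta> ^ p 0 * \<alpha> (\<gamma> (n - 1)) f * \<phi> (p, g))"
proof (cases "p 0")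
  case 0 thus ?thesis using n_arith by (simp add: corr_wrap_def qint'_def)
next
  case (Suc k) thus ?thesis using n_arith by (simp add: corr_wrap_def inc_dec qint'_Suc algebra_simps)
qed

lemma corr_prev_commute: assumes "i < j" "j < n" "f \<in> G"
  shows "corr_prev j p f * corr_prev i (dec (j - 1) p) (gmul (\<gamma> (j - 1)) f)
       = corr_prev i p f * corr_prev j (dec (i - 1) p) (gmul (\<gamma> (i - 1)) f)"
proof (cases "i = 0")
  case False
  let ?a = "i - 1" and ?b = "j - 1"
  have ab: "?a < n - 1" "?b < n - 1" "?a < ?b" using assms False by auto
  have "\<alpha> (\<gamma> ?a) (gmul (\<gamma> ?b) f) = (if j = Suc i then \<eta> else 1) * \<alpha> (\<gamma> ?a) f"
    using alpha_gmul_right[OF gen_in_Gset assms(3), of ?b "\<gamma> ?a"] alpha_gen_gen[OF ab(1,2)] ab False by auto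
  moreover have "\<alpha> (\<gamma> ?b) (gmul (\<gamma> ?a) f) = \<alpha> (\<gamma> ?b) f"
    using alpha_gmul_right[OF gen_in_Gset assms(3), of ?a "\<gamma> ?b"] alpha_gen_gen[OF ab(2,1)] ab by auto
  ultimately show ?thesis using assms False
    by (cases "j = Suc i"; cases "p i") (auto simp: corr_prev_def algebra_simps)
qed simp

text \<open>For \<open>i = 1\<close> the cocycle contributes a factor \<open>\<zeta>\<close>, which is absorbed by
  \<open>qint_identity\<close>.\<close>

lemma corr_wrap_commute: assumes "0 < i" "i < n - 1" "f \<in> G"
  shows "corr_wrap (n - 1) p f * corr_prev i (dec 0 p) (gmul (\<gamma> (n - 1)) f)
       = corr_prev i p f * corr_wrap (n - 1) (dec (i - 1) p) (gmul (\<gamma> (i - 1)) f)"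
proof -
  let ?a = "i - 1"
  have a: "?a < n - 1" "?a < n - 2" using assms by auto
  have al1: "\<alpha> (\<gamma> ?a) (gmul (\<gamma> (n - 1)) f) = \<zeta> * \<alpha> (\<gamma> ?a) f"
    using alpha_gmul_right[OF gen_in_Gset assms(3), of "n - 1" "\<gamma> ?a"] alpha_gen_gen_last[OF a(1)] a n_arith by simp
  have al2: "\<alpha> (\<gamma> (n - 1)) (gmul (\<gamma> ?a) f) = (if 0 < ?a then \<zeta> else 1) * \<alpha> (\<gamma> (n - 1)) f"
    using alpha_gmul_right[OF gen_in_Gset assms(3), of ?a "\<gamma> (n - 1)"] alpha_gen_last_gen[OF a(1)] a by simp
  show ?thesis
  proof (cases "i = 1")
    case True
    have "qint (p 0) * qint' (p 0 - 1) = qint' (p 0) * qint (p 0 - 1) * \<zeta>"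
      using qint_identity[of "p 0"] by (simp add: mult_ac)
    thus ?thesis using True al1 al2 n_arith by (simp add: corr_prev_def corr_wrap_def algebra_simps)
  next
    case False
    thus ?thesis using assms al1 al2 n_arith by (simp add: corr_prev_def corr_wrap_def algebra_simps)
  qed
qed

lemma act_X_rel_wrap:
  "act_X 0 (act_X (n - 1) \<phi>) s - act_X (n - 1) (act_X 0 \<phi>) s = t (n - 1) * act_G (\<gamma> (n - 1)) \<phi> s"
proof -
  obtain p f where s: "s = (p, f)" by fastforce
  show ?thesis
  proof (cases "f \<in> G")
    case f: True
    let ?N = "gmul (\<gamma> (n - 1)) f"
    have e1: "act_X 0 (act_X (n - 1) \<phi>) (p, f) = \<phi> (inc (n - 1) (inc 0 p), f)
      + corr_prev (n - 1) p f * \<phi> (inc 0 (dec (n - 2) p), gmul (\<gamma> (n - 2)) f)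
      + corr_wrap (n - 1) (inc 0 p) f * \<phi> (p, ?N)"
      unfolding act_X_act_X_expand[OF f n_arith(6)] using n_arith
      by (simp add: corr_prev_def corr_wrap_def dec_inc_commute dec_inc numeral_2_eq_2)
    have e2: "act_X (n - 1) (act_X 0 \<phi>) (p, f) = \<phi> (inc 0 (inc (n - 1) p), f)
      + corr_prev (n - 1) p f * \<phi> (inc 0 (dec (n - 2) p), gmul (\<gamma> (n - 2)) f)
      + corr_wrap (n - 1) p f * \<phi> (inc 0 (dec 0 p), ?N)"
      unfolding act_X_act_X_expand[OF f n_arith(3)] using n_arith
      by (simp add: corr_prev_def corr_wrap_def numeral_2_eq_2)
    have "act_G (\<gamma> (n - 1)) \<phi> (p, f) = \<zeta> ^ p (n - 1) * \<eta> ^ p 0 * \<alpha> (\<gamma> (n - 1)) f * \<phi> (p, ?N)"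
      using f n_ge_3 by (simp add: act_G_apply chi_gen)
    thus ?thesis unfolding s e1 e2 inc_commute[OF n_arith(1)] using corr_wrap_step[of p f \<phi> ?N]
      by (simp add: algebra_simps)
  qed (simp add: s act_X_apply act_G_apply)
qed

lemma rel_rearrange: fixes x a b c u v w y z a' a'' b' b'' c'' v' T :: complex
  assumes "b * v - b' * v' = T" "b * a' = a * b''" "c * a'' = a * c''"
  shows "x + a * u + b * (v + a' * y) + c * (w + a'' * z) - (x + b' * v' + c * w + a * (u + b'' * y + c'' * z)) = T"
proof -
  have "x + a * u + b * (v + a' * y) + c * (w + a'' * z) - (x + b' * v' + c * w + a * (u + b'' * y + c'' * z))
    = (b * v - b' * v') + (b * a' - a * b'') * y + (c * a'' - a * c'') * z" by (simp add: algebra_simps)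
  thus ?thesis using assms by simp
qed

lemma act_X_rel_step: assumes "Suc i < n"
  shows "act_X (Suc i) (act_X i \<phi>) s - act_X i (act_X (Suc i) \<phi>) s = t i * act_G (\<gamma> i) \<phi> s"
proof -
  define j where "j = Suc i"
  define k where "k = i - 1"
  have ij: "j < n" "i < n" "j - 1 = i" "i - 1 = k" "k \<noteq> j" "i \<noteq> j" using assms unfolding j_def k_def by auto
  obtain p f where s: "s = (p, f)" by fastforce
  show ?thesis unfolding j_def[symmetric]
  proof (cases "f \<in> G")
    case f: True
    let ?gi = "gmul (\<gamma> i) f" and ?gk = "gmul (\<gamma> k) f" and ?gN = "gmul (\<gamma> (n - 1)) f"
    have e1: "act_X j (act_X i \<phi>) (p, f) = \<phi> (inc i (inc j p), f)
      + corr_prev i p f * \<phi> (inc j (dec k p), ?gk)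
      + corr_prev j p f * (\<phi> (inc i (dec i p), ?gi) + corr_prev i (dec i p) ?gi * \<phi> (dec k (dec i p), gmul (\<gamma> k) ?gi))
      + corr_wrap j p f * (\<phi> (inc i (dec 0 p), ?gN) + corr_prev i (dec 0 p) ?gN * \<phi> (dec k (dec 0 p), gmul (\<gamma> k) ?gN))"
      unfolding act_X_act_X_expand[OF f ij(1)] using ij by (simp add: corr_prev_def dec_inc_commute)
    have e2: "act_X i (act_X j \<phi>) (p, f) = \<phi> (inc j (inc i p), f)
      + corr_prev j (inc i p) f * \<phi> (p, ?gi)
      + corr_wrap j p f * \<phi> (inc i (dec 0 p), ?gN)
      + corr_prev i p f * (\<phi> (inc j (dec k p), ?gk) + corr_prev j (dec k p) ?gk * \<phi> (dec i (dec k p), gmul (\<gamma> i) ?gk)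
          + corr_wrap j (dec k p) ?gk * \<phi> (dec 0 (dec k p), gmul (\<gamma> (n - 1)) ?gk))"
    proof -
      have "corr_wrap j (inc i p) f * \<phi> (dec 0 (inc i p), ?gN) = corr_wrap j p f * \<phi> (inc i (dec 0 p), ?gN)"
        using ij n_ge_3 by (cases "j = n - 1") (auto simp: j_def corr_wrap_def dec_inc_commute)
      thus ?thesis unfolding act_X_act_X_expand[OF f ij(2)] using ij by (simp add: dec_inc)
    qed
    have tg: "act_G (\<gamma> i) \<phi> (p, f) = \<zeta> ^ p i * \<eta> ^ p j * \<alpha> (\<gamma> i) f * \<phi> (p, ?gi)"
      using f ij by (simp add: act_G_apply chi_gen j_def)
    have wrap: "corr_wrap j p f * corr_prev i (dec 0 p) ?gN = corr_prev i p f * corr_wrap j (dec k p) ?gk"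
      using corr_wrap_commute[where i = i and p = p, OF _ _ f] ij n_ge_3 by (cases "j = n - 1") (auto simp: j_def k_def)
    have "act_X j (act_X i \<phi>) (p, f) - act_X i (act_X j \<phi>) (p, f) = t i * act_G (\<gamma> i) \<phi> (p, f)"
      unfolding e1 e2 inc_commute[OF ij(6)] dec_commute[of k i] gmul_left_commute[of "\<gamma> k"]
        dec_commute[of k 0] gmul_left_commute[of _ "\<gamma> (n - 1)"] tg
      by (rule rel_rearrange[OF corr_prev_step[of i p f \<phi> ?gi, folded j_def]
            corr_prev_commute[where i = i and j = j and p = p, OF _ ij(1) f, unfolded ij(3,4)] wrap]) (simp add: j_def)
    thus "act_X j (act_X i \<phi>) s - act_X i (act_X j \<phi>) s = t i * act_G (\<gamma> i) \<phi> s" unfolding s .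
  qed (simp add: s act_X_apply act_G_apply)
qed

lemma commute_rearrange: fixes x a b c u v w y z a' a'' b' c' :: complex
  assumes "b * a' = a * b'" "c * a'' = a * c'"
  shows "x + a * u + b * (v + a' * y) + c * (w + a'' * z) = x + b * v + c * w + a * (u + b' * y + c' * z)"
proof -
  have "x + a * u + b * (v + a' * y) + c * (w + a'' * z) = x + a * u + b * v + (b * a') * y + c * w + (c * a'') * z"
    by (simp add: algebra_simps)
  thus ?thesis unfolding assms by (simp add: algebra_simps)
qed

lemma act_X_commute_less: assumes ij: "i + 2 \<le> j" "j < n" "\<not> (i = 0 \<and> j = n - 1)"
  shows "act_X j (act_X i \<phi>) s = act_X i (act_X j \<phi>) s"
proof -
  obtain p f where s: "s = (p, f)" by fastforce
  have i': "i < n" "i \<noteq> n - 1" "i \<noteq> j" "i - 1 \<noteq> j" "i \<noteq> j - 1" "j - 1 \<noteq> i - 1" "j \<noteq> i - 1" using ij by auto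
  show ?thesis
  proof (cases "f \<in> G")
    case f: True
    let ?a = "i - 1" and ?b = "j - 1"
    let ?ga = "gmul (\<gamma> ?a) f" and ?gb = "gmul (\<gamma> ?b) f" and ?gN = "gmul (\<gamma> (n - 1)) f"
    have e1: "act_X j (act_X i \<phi>) (p, f) = \<phi> (inc i (inc j p), f)
      + corr_prev i p f * \<phi> (inc j (dec ?a p), ?ga)
      + corr_prev j p f * (\<phi> (inc i (dec ?b p), ?gb) + corr_prev i (dec ?b p) ?gb * \<phi> (dec ?a (dec ?b p), gmul (\<gamma> ?a) ?gb))
      + corr_wrap j p f * (\<phi> (inc i (dec 0 p), ?gN) + corr_prev i (dec 0 p) ?gN * \<phi> (dec ?a (dec 0 p), gmul (\<gamma> ?a) ?gN))"
      unfolding act_X_act_X_expand[OF f ij(2)] using i' by (simp add: corr_prev_def dec_inc_commute)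
    have e2: "act_X i (act_X j \<phi>) (p, f) = \<phi> (inc j (inc i p), f)
      + corr_prev j p f * \<phi> (inc i (dec ?b p), ?gb)
      + corr_wrap j p f * \<phi> (inc i (dec 0 p), ?gN)
      + corr_prev i p f * (\<phi> (inc j (dec ?a p), ?ga) + corr_prev j (dec ?a p) ?ga * \<phi> (dec ?b (dec ?a p), gmul (\<gamma> ?b) ?ga)
          + corr_wrap j (dec ?a p) ?ga * \<phi> (dec 0 (dec ?a p), gmul (\<gamma> (n - 1)) ?ga))"
    proof -
      have "corr_wrap j (inc i p) f * \<phi> (dec 0 (inc i p), ?gN) = corr_wrap j p f * \<phi> (inc i (dec 0 p), ?gN)"
        using ij i' by (cases "j = n - 1") (auto simp: corr_wrap_def dec_inc_commute)
      thus ?thesis unfolding act_X_act_X_expand[OF f i'(1)] using i' ij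
        by (simp add: corr_prev_def dec_inc_commute)
    qed
    have wrap: "corr_wrap j p f * corr_prev i (dec 0 p) ?gN = corr_prev i p f * corr_wrap j (dec ?a p) ?ga"
      using corr_wrap_commute[where i = i and p = p, OF _ _ f] ij by (cases "j = n - 1 \<and> i \<noteq> 0") auto
    show ?thesis unfolding s e1 e2 inc_commute[OF i'(3)] dec_commute[of ?a ?b] gmul_left_commute[of "\<gamma> ?a"]
      dec_commute[of ?a 0] gmul_left_commute[of _ "\<gamma> (n - 1)"]
      by (rule commute_rearrange[OF corr_prev_commute[where p = p, OF _ ij(2) f] wrap]) (use ij in auto)
  qed (simp add: s act_X_apply)
qed

lemma act_X_commute: assumes "i < n" "j < n" "nat \<bar>int i - int j\<bar> \<notin> {1, n - 1}"
  shows "act_X j (act_X i \<phi>) s = act_X i (act_X j \<phi>) s"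
proof -
  consider "i = j" | "i < j" | "j < i" by linarith
  thus ?thesis
  proof cases
    case 2 thus ?thesis using assms by (intro act_X_commute_less) auto
  next
    case 3 thus ?thesis using assms by (intro act_X_commute_less[symmetric]) auto
  qed simp
qed
section \<open>The induced action of \<open>TV #\<^sub>\<alpha> G\<close> and independence\<close>

primrec act_word :: "nat list \<Rightarrow> vec \<Rightarrow> vec" where
  "act_word [] \<phi> = \<phi>" | "act_word (j # w) \<phi> = act_word w (act_X j \<phi>)"

definition act_basis :: "idx \<Rightarrow> vec \<Rightarrow> vec" where "act_basis x \<phi> = act_G (snd x) (act_word (fst x) \<phi>)"
text \<open>Being a transpose, \<open>act\<close> reverses products (\<open>act_mul\<close>).\<close>

definition act :: "elem \<Rightarrow> vec \<Rightarrow> vec" where "act a \<phi> = (\<lambda>s. \<Sum>x\<in>supp a. a x * act_basis x \<phi> s)"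

lemma act_X_sum: "act_X j (\<lambda>s. \<Sum>y\<in>F. c y * \<psi> y s) s0 = (\<Sum>y\<in>F. c y * act_X j (\<psi> y) s0)"
proof -
  obtain p f where s: "s0 = (p, f)" by fastforce
  show ?thesis
  proof (cases "f \<in> G")
    case True thus ?thesis unfolding s act_X_expand[OF True]
      by (simp add: sum.distrib sum_distrib_left algebra_simps)
  qed (simp add: s act_X_apply)
qed

lemma act_G_sum: "act_G g (\<lambda>s. \<Sum>y\<in>F. c y * \<psi> y s) s0 = (\<Sum>y\<in>F. c y * act_G g (\<psi> y) s0)"
proof -
  obtain p f where s: "s0 = (p, f)" by fastforce
  show ?thesis unfolding s act_G_apply by (simp add: sum_distrib_left algebra_simps)
qed

lemma act_G_scale: "act_G g (\<lambda>s. c * \<psi> s) s0 = c * act_G g \<psi> s0"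
  using act_G_sum[where F="{()}" and c="\<lambda>_. c" and \<psi>="\<lambda>_. \<psi>"] by simp

lemma act_word_sum: "act_word w (\<lambda>s. \<Sum>y\<in>F. c y * \<psi> y s) = (\<lambda>s. \<Sum>y\<in>F. c y * act_word w (\<psi> y) s)"
proof (induction w arbitrary: \<psi>)
  case (Cons j w)
  have "act_X j (\<lambda>s. \<Sum>y\<in>F. c y * \<psi> y s) = (\<lambda>s. \<Sum>y\<in>F. c y * act_X j (\<psi> y) s)"
    by (rule ext) (rule act_X_sum)
  thus ?case using Cons by simp
qed simp

lemma act_word_scale: "act_word w (\<lambda>s. c * \<psi> s) = (\<lambda>s. c * act_word w \<psi> s)"
  using act_word_sum[where F="{()}" and c="\<lambda>_. c" and \<psi>="\<lambda>_. \<psi>"] by simp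

lemma act_basis_sum: "act_basis x (\<lambda>s. \<Sum>y\<in>F. c y * \<psi> y s) s0 = (\<Sum>y\<in>F. c y * act_basis x (\<psi> y) s0)"
  unfolding act_basis_def act_word_sum act_G_sum ..

lemma act_word_append: "act_word (w @ v) \<phi> = act_word v (act_word w \<phi>)"
  by (induction w arbitrary: \<phi>) auto

lemma act_word_act_G: "g \<in> G \<Longrightarrow> set v \<subseteq> {..<n} \<Longrightarrow> act_word v (act_G g \<phi>) = (\<lambda>s. prod_list (map g v) * act_G g (act_word v \<phi>) s)"
proof (induction v arbitrary: \<phi>)
  case Nil thus ?case by simp
next
  case (Cons j v)
  have "act_word (j # v) (act_G g \<phi>) = act_word v (\<lambda>s. g j * act_G g (act_X j \<phi>) s)" using act_X_act_G[OF Cons.prems(1)] Cons.prems(2) by simp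
  also have "\<dots> = (\<lambda>s. g j * act_word v (act_G g (act_X j \<phi>)) s)" by (rule act_word_scale)
  also have "\<dots> = (\<lambda>s. g j * (prod_list (map g v) * act_G g (act_word v (act_X j \<phi>)) s))" using Cons by simp
  finally show ?case by (simp add: mult_ac)
qed

lemma act_basis_idx_mul: assumes "set (fst x) \<subseteq> {..<n}" "snd x \<in> G" "set (fst y) \<subseteq> {..<n}" "snd y \<in> G"
  shows "act_basis y (act_basis x \<phi>) s = sc x y * act_basis (idx_mul x y) \<phi> s"
proof -
  obtain w g v h where xy: "x = (w, g)" "y = (v, h)" by fastforce
  have "act_basis y (act_basis x \<phi>) s = act_G h (act_word v (act_G g (act_word w \<phi>))) s" by (simp add: act_basis_def xy)
  also have "\<dots> = act_G h (\<lambda>s. prod_list (map g v) * act_G g (act_word (w @ v) \<phi>) s) s"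
    using assms xy by (simp add: act_word_act_G act_word_append)
  also have "\<dots> = prod_list (map g v) * act_G h (act_G g (act_word (w @ v) \<phi>)) s" by (rule act_G_scale)
  also have "\<dots> = prod_list (map g v) * (\<alpha> g h * act_G (gmul g h) (act_word (w @ v) \<phi>) s)"
    using act_G_act_G assms xy by simp
  finally show ?thesis by (simp add: xy scoef_apply act_basis_def idx_mul_def mult_ac)
qed

lemma act_superset: "finite F \<Longrightarrow> supp a \<subseteq> F \<Longrightarrow> act a \<phi> s = (\<Sum>x\<in>F. a x * act_basis x \<phi> s)"
  unfolding act_def by (rule sum.mono_neutral_left) (auto simp: supp_def)

lemma act_mul: assumes a: "a \<in> \<A>" and b: "b \<in> \<A>" shows "act (mul a b) \<phi> s = act b (act a \<phi>) s"
proof -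
  let ?W = "(\<lambda>(x, y). idx_mul x y) ` (supp a \<times> supp b)"
  have fa: "finite (supp a)" and fb: "finite (supp b)" using a b by (auto simp: Alg_iff)
  have fW: "finite ?W" using fa fb by simp
  have "act (mul a b) \<phi> s = (\<Sum>w\<in>?W. mul a b w * act_basis w \<phi> s)" by (rule act_superset[OF fW supp_mul])
  also have "\<dots> = (\<Sum>w\<in>?W. \<Sum>x\<in>supp a. \<Sum>y\<in>supp b. a x * b y * sc x y * (if w = idx_mul x y then act_basis w \<phi> s else 0))"
    unfolding mul_apply sum_distrib_right by (intro sum.cong refl) simp
  also have "\<dots> = (\<Sum>x\<in>supp a. \<Sum>y\<in>supp b. \<Sum>w\<in>?W. a x * b y * sc x y * (if w = idx_mul x y then act_basis w \<phi> s else 0))"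
    by (subst sum.swap) (simp add: sum.swap[of _ ?W])
  also have "\<dots> = (\<Sum>x\<in>supp a. \<Sum>y\<in>supp b. a x * b y * sc x y * act_basis (idx_mul x y) \<phi> s)"
  proof (intro sum.cong refl)
    fix x y assume "x \<in> supp a" "y \<in> supp b"
    hence "idx_mul x y \<in> ?W" by auto
    thus "(\<Sum>w\<in>?W. a x * b y * sc x y * (if w = idx_mul x y then act_basis w \<phi> s else 0)) = a x * b y * sc x y * act_basis (idx_mul x y) \<phi> s"
      using fW by (simp add: if_distrib sum.delta' cong: if_cong)
  qed
  also have "\<dots> = (\<Sum>y\<in>supp b. b y * (\<Sum>x\<in>supp a. a x * act_basis y (act_basis x \<phi>) s))"
  proof -
    have "act_basis y (act_basis x \<phi>) s = sc x y * act_basis (idx_mul x y) \<phi> s" if "x \<in> supp a" "y \<in> supp b" for x y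
      using that a b by (intro act_basis_idx_mul) (auto simp: Alg_iff)
    hence "(\<Sum>y\<in>supp b. b y * (\<Sum>x\<in>supp a. a x * act_basis y (act_basis x \<phi>) s)) = (\<Sum>y\<in>supp b. \<Sum>x\<in>supp a. a x * b y * sc x y * act_basis (idx_mul x y) \<phi> s)"
      by (simp add: sum_distrib_left mult_ac cong: sum.cong)
    thus ?thesis by (simp add: sum.swap[of _ "supp b"])
  qed
  also have "\<dots> = act b (act a \<phi>) s" unfolding act_def act_basis_sum ..
  finally show ?thesis .
qed

lemma act_eadd: "finite (supp a) \<Longrightarrow> finite (supp b) \<Longrightarrow> act (eadd a b) \<phi> s = act a \<phi> s + act b \<phi> s"
proof -
  assume fa: "finite (supp a)" and fb: "finite (supp b)"
  let ?F = "supp a \<union> supp b"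
  have "supp (eadd a b) \<subseteq> ?F" by (auto simp: supp_def eadd_def)
  hence "act (eadd a b) \<phi> s = (\<Sum>x\<in>?F. eadd a b x * act_basis x \<phi> s)" using fa fb by (intro act_superset) auto
  also have "\<dots> = (\<Sum>x\<in>?F. a x * act_basis x \<phi> s) + (\<Sum>x\<in>?F. b x * act_basis x \<phi> s)"
    by (simp add: eadd_def sum.distrib algebra_simps)
  also have "\<dots> = act a \<phi> s + act b \<phi> s"
  proof -
    have "act a \<phi> s = (\<Sum>x\<in>?F. a x * act_basis x \<phi> s)" "act b \<phi> s = (\<Sum>x\<in>?F. b x * act_basis x \<phi> s)"
      by (rule act_superset; use fa fb in auto)+
    thus ?thesis by simp
  qed
  finally show ?thesis .
qed

lemma act_esmul: "act (esmul c a) \<phi> s = c * act a \<phi> s"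
proof (cases "c = 0")
  case True thus ?thesis by (simp add: act_def esmul_def supp_def)
next
  case False
  hence "supp (esmul c a) = supp a" by (auto simp: supp_def esmul_def)
  thus ?thesis by (simp add: act_def esmul_def sum_distrib_left mult_ac)
qed

lemma act_esub: "finite (supp a) \<Longrightarrow> finite (supp b) \<Longrightarrow> act (esub a b) \<phi> s = act a \<phi> s - act b \<phi> s"
proof -
  assume fa: "finite (supp a)" and fb: "finite (supp b)"
  have e: "esub a b = eadd a (esmul (-1) b)" by (auto simp: esub_def eadd_def esmul_def)
  have "supp (esmul (-1) b) = supp b" by (auto simp: supp_def esmul_def)
  thus ?thesis unfolding e using fa fb by (simp add: act_eadd act_esmul)
qed

lemma act_ezero: "act ezero \<phi> s = 0" by (simp add: act_def ezero_def supp_def)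

lemma act_G_gone: "act_G gone (act_X j \<phi>) s = act_X j \<phi> s"
proof -
  obtain p f where s: "s = (p, f)" by fastforce
  show ?thesis by (simp add: s act_G_apply act_X_apply chi_def gone_def[symmetric]) (simp add: gone_def)
qed

lemma act_X_eq: "act (X j) \<phi> s = act_X j \<phi> s"
  by (simp add: act_def X_def supp_B act_basis_def act_G_gone) (simp add: B_def)

lemma act_Gel: "act (Gel g) \<phi> s = act_G g \<phi> s"
  by (simp add: act_def Gel_def supp_B act_basis_def) (simp add: B_def)

lemma act_basis_zero: "act_basis x (\<lambda>_. 0) s = 0"
  using act_basis_sum[where F="{}" and x=x] by simp

lemma act_zero: "act b (\<lambda>_. 0) s = 0"
  by (simp add: act_def act_basis_zero)

lemma act_X_fun: "act (X j) \<phi> = act_X j \<phi>" by (rule ext) (rule act_X_eq)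

lemma Rels_Alg: "r \<in> Rels n l \<zeta> t \<Longrightarrow> r \<in> \<A>"
  unfolding Rels_def
  by (auto intro!: esub_Alg mul_Alg X_Alg esmul_Alg Gel_Alg gen_in_Gset n_ge_3)

lemma Ideal_Alg: "r \<in> Ideal n l \<zeta> t \<Longrightarrow> r \<in> \<A>"
  by (induction rule: Ideal.induct) (auto intro: Rels_Alg ezero_Alg eadd_Alg esmul_Alg mul_Alg)

lemma act_Rels: assumes "r \<in> Rels n l \<zeta> t" shows "act r \<phi> s = 0"
  using assms unfolding Rels_def
proof (elim UnE CollectE exE conjE)
  fix i assume r: "r = esub (esub (mul (X i) (X (Suc i mod n))) (mul (X (Suc i mod n)) (X i))) (esmul (t i) (Gel (\<gamma> i)))"
    and i: "i < n"
  let ?i' = "Suc i mod n"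
  have i': "?i' < n" using n_ge_3 by simp
  have A: "mul (X i) (X ?i') \<in> \<A>" "mul (X ?i') (X i) \<in> \<A>" "esmul (t i) (Gel (\<gamma> i)) \<in> \<A>"
    "esub (mul (X i) (X ?i')) (mul (X ?i') (X i)) \<in> \<A>"
    using i i' gen_in_Gset by (auto intro!: mul_Alg X_Alg esmul_Alg Gel_Alg esub_Alg)
  have "act r \<phi> s = act_X ?i' (act_X i \<phi>) s - act_X i (act_X ?i' \<phi>) s - t i * act_G (\<gamma> i) \<phi> s"
    unfolding r using A i i'
    by (simp add: act_esub finite_supp_Alg act_mul X_Alg act_X_fun act_esmul act_Gel)
  also have "\<dots> = 0"
  proof (cases "i = n - 1")
    case True
    hence "?i' = 0" using n_ge_3 by simp
    thus ?thesis using act_X_rel_wrap[of \<phi> s] True by simp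
  next
    case False
    hence "Suc i < n" "?i' = Suc i" using i by auto
    thus ?thesis using act_X_rel_step[of i \<phi> s] by simp
  qed
  finally show ?thesis .
next
  fix i j assume r: "r = esub (mul (X i) (X j)) (mul (X j) (X i))" and ij: "i < n" "j < n"
    "nat \<bar>int i - int j\<bar> \<notin> {1, n - 1}"
  have A: "mul (X i) (X j) \<in> \<A>" "mul (X j) (X i) \<in> \<A>" using ij by (auto intro!: mul_Alg X_Alg)
  have "act r \<phi> s = act_X j (act_X i \<phi>) s - act_X i (act_X j \<phi>) s"
    unfolding r using A ij by (simp add: act_esub finite_supp_Alg act_mul X_Alg act_X_fun)
  thus ?thesis using act_X_commute[OF ij] by simp
qed

lemma act_Ideal: "r \<in> Ideal n l \<zeta> t \<Longrightarrow> \<forall>\<phi> s. act r \<phi> s = 0"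
proof (induction rule: Ideal.induct)
  case (gen_rel r) thus ?case using act_Rels by blast
next
  case zero thus ?case by (simp add: act_ezero)
next
  case (add a b) thus ?case using Ideal_Alg by (simp add: act_eadd finite_supp_Alg)
next
  case (smul a c) thus ?case by (simp add: act_esmul)
next
  case (lmul a b) thus ?case using Ideal_Alg by (simp add: act_mul)
next
  case (rmul a b)
  have "\<And>\<phi>. act a \<phi> = (\<lambda>_. 0)" using rmul by auto
  thus ?case using Ideal_Alg rmul by (simp add: act_mul act_zero)
qed

lemma act_X_leading: "f \<in> G \<Longrightarrow> \<forall>i<j. q i = 0 \<Longrightarrow> act_X j \<phi> (q, f) = \<phi> (inc j q, f)"
proof -
  assume f: "f \<in> G" and q: "\<forall>i<j. q i = 0"
  have "corr_prev j q f = 0" using q by (cases j) (auto simp: corr_prev_def)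
  moreover have "corr_wrap j q f = 0" using q n_ge_3 by (auto simp: corr_wrap_def)
  ultimately show ?thesis using act_X_expand[OF f] by simp
qed

lemma act_word_sorted: "sorted w \<Longrightarrow> g \<in> G \<Longrightarrow> (\<forall>x\<in>set w. \<forall>i<x. q i = 0) \<Longrightarrow>
   act_word w \<phi> (q, g) = \<phi> (\<lambda>i. q i + count_list w i, g)"
proof (induction w arbitrary: \<phi>)
  case Nil thus ?case by simp
next
  case (Cons x w)
  have ih: "act_word w (act_X x \<phi>) (q, g) = act_X x \<phi> (\<lambda>i. q i + count_list w i, g)" using Cons by auto
  have "\<forall>i<x. q i + count_list w i = 0"
  proof (intro allI impI)
    fix i assume "i < x"
    hence "i \<notin> set w" using Cons.prems(1) by auto
    moreover have "q i = 0" using Cons.prems(3) \<open>i < x\<close> by auto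
    ultimately show "q i + count_list w i = 0" by (simp add: count_list_0_iff)
  qed
  hence "act_X x \<phi> (\<lambda>i. q i + count_list w i, g) = \<phi> (inc x (\<lambda>i. q i + count_list w i), g)"
    by (rule act_X_leading[OF Cons.prems(2)])
  moreover have "inc x (\<lambda>i. q i + count_list w i) = (\<lambda>i. q i + count_list (x # w) i)"
    by (auto simp: inc_def)
  ultimately show ?case using ih by simp
qed

lemma act_mono_origin: assumes "m \<in> Mon n l" shows "act (mono n m) \<phi> (\<lambda>_. 0, gone) = \<phi> m"
proof -
  obtain p g where m: "m = (p, g)" by fastforce
  have g: "g \<in> G" and p: "\<forall>i\<ge>n. p i = 0" using assms m by (auto simp: Mon_def)
  have "act (mono n m) \<phi> (\<lambda>_. 0, gone) = act_G g (act_word (word p) \<phi>) (\<lambda>_. 0, gone)"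
    by (simp add: act_def mono_eq_B_word m supp_B act_basis_def) (simp add: B_def)
  also have "\<dots> = act_word (word p) \<phi> (\<lambda>_. 0, g)" using gone_in_Gset by (simp add: act_G_apply chi_zero)
  also have "\<dots> = \<phi> (\<lambda>i. count_list (word p) i, g)"
    using act_word_sorted[OF sorted_word[of p] g, where q = "\<lambda>_. 0"] by simp
  also have "(\<lambda>i. count_list (word p) i) = p" using p by (auto simp: count_list_word)
  finally show ?thesis by (simp add: m)
qed

lemma act_sum: assumes "finite S" "\<forall>m\<in>S. finite (supp (b m))"
  shows "act (\<lambda>x. \<Sum>m\<in>S. c m * b m x) \<phi> s = (\<Sum>m\<in>S. c m * act (b m) \<phi> s)"
proof -
  let ?F = "\<Union>m\<in>S. supp (b m)"
  have fF: "finite ?F" using assms by auto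
  have sub: "supp (\<lambda>x. \<Sum>m\<in>S. c m * b m x) \<subseteq> ?F" by (rule supp_sum_subset)
  have "act (\<lambda>x. \<Sum>m\<in>S. c m * b m x) \<phi> s = (\<Sum>x\<in>?F. (\<Sum>m\<in>S. c m * b m x) * act_basis x \<phi> s)"
    by (rule act_superset[OF fF sub])
  also have "\<dots> = (\<Sum>m\<in>S. c m * (\<Sum>x\<in>?F. b m x * act_basis x \<phi> s))"
    by (simp add: sum_distrib_right sum_distrib_left sum.swap[of _ ?F] mult_ac)
  also have "\<dots> = (\<Sum>m\<in>S. c m * act (b m) \<phi> s)"
    using assms fF by (intro sum.cong refl arg_cong2[where f="(*)"] act_superset[symmetric]) auto
  finally show ?thesis .
qed

lemma act_lincomb_origin: "finite S \<Longrightarrow> S \<subseteq> Mon n l \<Longrightarrow> act (lincomb n S c) \<phi> (\<lambda>_. 0, gone) = (\<Sum>m\<in>S. c m * \<phi> m)"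
proof -
  assume S: "finite S" "S \<subseteq> Mon n l"
  have "act (lincomb n S c) \<phi> (\<lambda>_. 0, gone) = (\<Sum>m\<in>S. c m * act (mono n m) \<phi> (\<lambda>_. 0, gone))"
    unfolding lincomb_def using S by (subst act_sum) (auto intro: finite_supp_Alg mono_Alg)
  also have "\<dots> = (\<Sum>m\<in>S. c m * \<phi> m)" using S act_mono_origin by (intro sum.cong refl) auto
  finally show ?thesis .
qed

lemma lincomb_Ideal_coeff_zero: assumes "finite S" "S \<subseteq> Mon n l" "lincomb n S c \<in> Ideal n l \<zeta> t" "m \<in> S"
  shows "c m = 0"
proof -
  let ?\<phi> = "\<lambda>x. if x = m then (1::complex) else 0"
  have "act (lincomb n S c) ?\<phi> (\<lambda>_. 0, gone) = 0" using act_Ideal[OF assms(3)] by blast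
  moreover have "act (lincomb n S c) ?\<phi> (\<lambda>_. 0, gone) = c m"
    using act_lincomb_origin[OF assms(1,2)] assms(1,4) by (simp add: if_distrib sum.delta' cong: if_cong)
  ultimately show ?thesis by simp
qed

section \<open>Straightening\<close>

abbreviation "\<I> \<equiv> Ideal n l \<zeta> t"

lemma Ideal_sum: "finite S \<Longrightarrow> \<forall>m\<in>S. r m \<in> \<I> \<Longrightarrow> (\<lambda>x. \<Sum>m\<in>S. c m * r m x) \<in> \<I>"
proof (induction S rule: finite_induct)
  case empty
  have "(\<lambda>x. \<Sum>m\<in>{}. c m * r m x) = ezero" by (simp add: ezero_def)
  thus ?case using Ideal.zero by simp
next
  case (insert a S)
  have "(\<lambda>x. \<Sum>m\<in>insert a S. c m * r m x) = eadd (esmul (c a) (r a)) (\<lambda>x. \<Sum>m\<in>S. c m * r m x)"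
    using insert by (auto simp: eadd_def esmul_def)
  thus ?case using insert by (auto intro: Ideal.add Ideal.smul)
qed

definition spanned :: "nat \<Rightarrow> elem \<Rightarrow> bool" where
  "spanned D a \<longleftrightarrow> (\<exists>c. esub a (lincomb n (MonLe D) c) \<in> \<I>)"

lemma esub_self: "esub a a = ezero" by (simp add: esub_def ezero_def)

lemma spanned_mono: assumes "m \<in> MonLe D" shows "spanned D (mono n m)"
proof -
  have "lincomb n (MonLe D) (\<lambda>u. if u = m then 1 else 0) = mono n m"
  proof
    fix x
    have "lincomb n (MonLe D) (\<lambda>u. if u = m then 1 else 0) x = (\<Sum>u\<in>MonLe D. if u = m then mono n u x else 0)"
      unfolding lincomb_def by (intro sum.cong) auto
    also have "\<dots> = mono n m x" using assms finite_MonLe by simp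
    finally show "lincomb n (MonLe D) (\<lambda>u. if u = m then 1 else 0) x = mono n m x" .
  qed
  hence "esub (mono n m) (lincomb n (MonLe D) (\<lambda>u. if u = m then 1 else 0)) \<in> \<I>"
    using esub_self Ideal.zero by simp
  thus ?thesis unfolding spanned_def by blast
qed

lemma spanned_cong: "spanned D b \<Longrightarrow> esub a b \<in> \<I> \<Longrightarrow> spanned D a"
proof -
  assume "spanned D b" "esub a b \<in> \<I>"
  then obtain c where c: "esub b (lincomb n (MonLe D) c) \<in> \<I>" unfolding spanned_def by blast
  have "esub a (lincomb n (MonLe D) c) = eadd (esub a b) (esub b (lincomb n (MonLe D) c))"
    by (auto simp: esub_def eadd_def)
  hence "esub a (lincomb n (MonLe D) c) \<in> \<I>" using c \<open>esub a b \<in> \<I>\<close> Ideal.add by simp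
  thus "spanned D a" unfolding spanned_def by blast
qed

lemma spanned_sum: assumes "finite S" "\<forall>m\<in>S. spanned D (a m)" shows "spanned D (\<lambda>x. \<Sum>m\<in>S. k m * a m x)"
proof -
  obtain c where c: "\<forall>m\<in>S. esub (a m) (lincomb n (MonLe D) (c m)) \<in> \<I>"
    using assms(2) unfolding spanned_def by metis
  let ?c = "\<lambda>u. \<Sum>m\<in>S. k m * c m u"
  have "esub (\<lambda>x. \<Sum>m\<in>S. k m * a m x) (lincomb n (MonLe D) ?c)
      = (\<lambda>x. \<Sum>m\<in>S. k m * esub (a m) (lincomb n (MonLe D) (c m)) x)"
    by (auto simp: esub_def lincomb_def sum_subtractf[symmetric] right_diff_distrib
          sum_distrib_left sum_distrib_right sum.swap[of _ S] mult_ac)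
  hence "esub (\<lambda>x. \<Sum>m\<in>S. k m * a m x) (lincomb n (MonLe D) ?c) \<in> \<I>"
    using Ideal_sum[OF assms(1) c, of k] by simp
  thus ?thesis unfolding spanned_def by blast
qed

lemma spanned_eadd: "spanned D a \<Longrightarrow> spanned D b \<Longrightarrow> spanned D (eadd a b)"
  using spanned_sum[of "{True, False}" D "\<lambda>m. if m then a else b" "\<lambda>_. 1"]
  by (simp add: eadd_def)
lemma spanned_esmul: "spanned D a \<Longrightarrow> spanned D (esmul k a)"
  using spanned_sum[of "{()}" D "\<lambda>_. a" "\<lambda>_. k"] by (simp add: esmul_def)

lemma swap_letters_commuting:
  assumes "i < n" "j < n" "nat \<bar>int j - int i\<bar> \<notin> {1, n - 1}" "B w g \<in> \<A>"
  shows "esub (B (j # i # w) g) (B (i # j # w) g) \<in> \<I>"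
proof -
  let ?r = "esub (mul (X j) (X i)) (mul (X i) (X j))"
  have "?r \<in> Rels n l \<zeta> t" unfolding Rels_def using assms by (intro UnI2 CollectI exI[of _ j] exI[of _ i]) auto
  hence "mul ?r (B w g) \<in> \<I>" using assms(4) by (intro Ideal.rmul Ideal.gen_rel)
  moreover have "mul (X j) (X i) \<in> \<A>" "mul (X i) (X j) \<in> \<A>" using assms by (auto intro: mul_Alg X_Alg)
  ultimately show ?thesis using assms(4) by (simp add: mul_esub_left finite_supp_Alg mul_X_X_B)
qed

lemma swap_letters_adjacent: assumes "Suc i < n" "g \<in> G" "B w g \<in> \<A>"
  shows "esub (B (Suc i # i # w) g) (eadd (B (i # Suc i # w) g)
           (esmul (- (t i * (\<alpha> (\<gamma> i) g * prod_list (map (\<gamma> i) w)))) (B w (gmul (\<gamma> i) g)))) \<in> \<I>"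
proof -
  let ?r = "esub (esub (mul (X i) (X (Suc i))) (mul (X (Suc i)) (X i))) (esmul (t i) (Gel (\<gamma> i)))"
  have "?r \<in> Rels n l \<zeta> t" unfolding Rels_def using assms(1) by (intro UnI1 CollectI exI[of _ i]) auto
  hence "esmul (-1) (mul ?r (B w g)) \<in> \<I>" using assms(3) by (intro Ideal.smul Ideal.rmul Ideal.gen_rel)
  moreover have "mul (X i) (X (Suc i)) \<in> \<A>" "mul (X (Suc i)) (X i) \<in> \<A>" "\<gamma> i \<in> G"
    using assms(1) by (auto intro!: mul_Alg X_Alg gen_in_Gset)
  hence "esmul (-1) (mul ?r (B w g)) = esub (B (Suc i # i # w) g) (eadd (B (i # Suc i # w) g)
           (esmul (- (t i * (\<alpha> (\<gamma> i) g * prod_list (map (\<gamma> i) w)))) (B w (gmul (\<gamma> i) g))))"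
    using assms(3)
    by (simp add: mul_esub_left finite_supp_Alg mul_X_X_B esub_Alg esmul_Alg Gel_Alg mul_esmul_left mul_Gel_B)
      (auto simp: esub_def eadd_def esmul_def)
  ultimately show ?thesis by simp
qed

lemma swap_letters_wrap: assumes "g \<in> G" "B w g \<in> \<A>"
  shows "esub (B ((n - 1) # 0 # w) g) (eadd (B (0 # (n - 1) # w) g)
           (esmul (t (n - 1) * (\<alpha> (\<gamma> (n - 1)) g * prod_list (map (\<gamma> (n - 1)) w))) (B w (gmul (\<gamma> (n - 1)) g)))) \<in> \<I>"
proof -
  let ?r = "esub (esub (mul (X (n - 1)) (X 0)) (mul (X 0) (X (n - 1)))) (esmul (t (n - 1)) (Gel (\<gamma> (n - 1))))"
  have "Suc (n - 1) mod n = 0" using n_ge_3 by simp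
  hence "?r \<in> Rels n l \<zeta> t" unfolding Rels_def using n_ge_3 by (intro UnI1 CollectI exI[of _ "n - 1"]) auto
  hence "mul ?r (B w g) \<in> \<I>" using assms(2) by (intro Ideal.rmul Ideal.gen_rel)
  moreover have "mul (X (n - 1)) (X 0) \<in> \<A>" "mul (X 0) (X (n - 1)) \<in> \<A>" "\<gamma> (n - 1) \<in> G"
    using n_ge_3 by (auto intro!: mul_Alg X_Alg gen_in_Gset)
  hence "mul ?r (B w g) = esub (B ((n - 1) # 0 # w) g) (eadd (B (0 # (n - 1) # w) g)
           (esmul (t (n - 1) * (\<alpha> (\<gamma> (n - 1)) g * prod_list (map (\<gamma> (n - 1)) w))) (B w (gmul (\<gamma> (n - 1)) g))))"
    using assms(2)
    by (simp add: mul_esub_left finite_supp_Alg mul_X_X_B esub_Alg esmul_Alg Gel_Alg mul_esmul_left mul_Gel_B)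
      (auto simp: esub_def eadd_def esmul_def)
  ultimately show ?thesis by simp
qed

lemma swap_letters: assumes "i < j" "j < n" "g \<in> G" "set w \<subseteq> {..<n}"
  shows "\<exists>k g'. g' \<in> G \<and> esub (B (j # i # w) g) (eadd (B (i # j # w) g) (esmul k (B w g'))) \<in> \<I>"
proof -
  have BA: "B w g \<in> \<A>" by (rule B_Alg[OF assms(4,3)])
  consider "nat \<bar>int j - int i\<bar> \<notin> {1, n - 1}" | "j = Suc i" | "j = n - 1" "i = 0"
    using assms(1,2) by force
  thus ?thesis
  proof cases
    case 1
    hence "esub (B (j # i # w) g) (eadd (B (i # j # w) g) (esmul 0 (B w g))) \<in> \<I>"
      using swap_letters_commuting[OF _ assms(2) 1 BA] assms(1,2) by (simp add: eadd_def esmul_def)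
    thus ?thesis using assms(3) by blast
  next
    case 2
    hence "Suc i < n" using assms(2) by simp
    hence "gmul (\<gamma> i) g \<in> G" using gmul_in_Gset[OF gen_in_Gset assms(3)] by simp
    with swap_letters_adjacent[OF \<open>Suc i < n\<close> assms(3) BA] show ?thesis unfolding 2 by blast
  next
    case 3
    have "gmul (\<gamma> (n - 1)) g \<in> G" using gmul_in_Gset[OF gen_in_Gset assms(3)] n_ge_3 by simp
    with swap_letters_wrap[OF assms(3) BA] show ?thesis unfolding 3 by blast
  qed
qed

lemma least_nonzero_below:
  fixes p :: "nat \<Rightarrow> nat"
  assumes "\<not> (\<forall>i<j. p i = 0)"
  obtains i where "i < j" "0 < p i" "\<forall>k<i. p k = 0"
proof -
  obtain i1 where i1: "i1 < j" "p i1 \<noteq> 0" using assms by auto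
  define i where "i = (LEAST i. p i \<noteq> 0)"
  have "p i \<noteq> 0" unfolding i_def by (rule LeastI[of "\<lambda>i. p i \<noteq> 0", OF i1(2)])
  moreover have "i \<le> i1" unfolding i_def by (rule Least_le) (rule i1(2))
  hence "i < j" using i1(1) by simp
  moreover have "\<forall>k<i. p k = 0" unfolding i_def using not_less_Least by blast
  ultimately show ?thesis using that by simp
qed

lemma spanned_mul_X:
  assumes "spanned D0 b" "b \<in> \<A>" "j < n"
    and step: "\<And>m. m \<in> MonLe D0 \<Longrightarrow> spanned D (B (j # word (fst m)) (snd m))"
  shows "spanned D (mul (X j) b)"
proof -
  obtain c where c: "esub b (lincomb n (MonLe D0) c) \<in> \<I>" using assms(1) unfolding spanned_def by blast
  let ?L = "lincomb n (MonLe D0) c"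
  have MonLe: "MonLe D0 \<subseteq> Mon n l" by (auto simp: MonLe_def)
  have monoA: "\<forall>m\<in>MonLe D0. finite (supp (mono n m))" using mono_Alg finite_supp_Alg MonLe by blast
  have LA: "finite (supp ?L)" using lincomb_Alg[OF finite_MonLe MonLe] by (rule finite_supp_Alg)
  have XA: "X j \<in> \<A>" using assms(3) by (rule X_Alg)
  have "mul (X j) (esub b ?L) \<in> \<I>" using c XA by (rule Ideal.lmul)
  hence e: "esub (mul (X j) b) (mul (X j) ?L) \<in> \<I>"
    using mul_esub_right[OF finite_supp_Alg[OF assms(2)] LA finite_supp_Alg[OF XA]] by simp
  have "mul (X j) ?L = (\<lambda>w. \<Sum>m\<in>MonLe D0. c m * mul (X j) (mono n m) w)"
    unfolding lincomb_def by (rule mul_sum_right[OF finite_MonLe monoA finite_supp_Alg[OF XA]])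
  also have "\<dots> = (\<lambda>w. \<Sum>m\<in>MonLe D0. c m * B (j # word (fst m)) (snd m) w)" by (simp add: mono_eq_B_word mul_X_B)
  finally have "spanned D (mul (X j) ?L)" using spanned_sum[OF finite_MonLe] step by simp
  thus ?thesis using spanned_cong e by blast
qed

text \<open>Induction on \<open>j\<close> and, for fixed \<open>j\<close>, on the total exponent of the letters below \<open>j\<close>:
  \<open>x_j\<close> is swapped with the smallest letter \<open>x_i\<close> of \<open>x^p\<close>, the word \<open>x_j x^(p - e_i)\<close> is
  straightened by the inner hypothesis, and then \<open>x_i\<close> is moved in by the outer one.\<close>

lemma spanned_X_word: assumes "j < n" "(p, g) \<in> Mon n l" "deg p + 1 \<le> D"
  shows "spanned D (B (j # word p) g)"
  using assms
proof (induction j arbitrary: p g D rule: less_induct)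
  case (less j)
  show ?case using less.prems
  proof (induction "\<Sum>i<j. p i" arbitrary: p g D rule: less_induct)
    case less2: less
    have g: "g \<in> G" using less2.prems(2) by (auto simp: Mon_def)
    show ?case
    proof (cases "\<forall>i<j. p i = 0")
      case True
      have "B (j # word p) g = mono n (inc j p, g)" using word_inc[OF less2.prems(1) True] by (simp add: mono_eq_B_word)
      moreover have "(inc j p, g) \<in> MonLe D" using Mon_inc[OF less2.prems(2,1)] deg_inc[OF less2.prems(1)] less2.prems(3)
        by (simp add: MonLe_def)
      ultimately show ?thesis using spanned_mono by simp
    next
      case False
      then obtain i where i: "i < j" "0 < p i" "\<forall>k<i. p k = 0"
        by (rule least_nonzero_below)
      have "i < n" using i less2.prems(1) by simp
      define q where "q = dec i p"
      have wp: "word p = i # word q" unfolding q_def using word_dec[OF \<open>i < n\<close>] i by simp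
      have dq: "Suc (deg q) = deg p" unfolding q_def using deg_dec[OF \<open>i < n\<close>] i by simp
      have sq: "(\<Sum>k<j. q k) < (\<Sum>k<j. p k)" unfolding q_def using sum_lessThan_dec[of i j p] i by simp
      obtain k g' where g': "g' \<in> G"
        and sw: "esub (B (j # i # word q) g) (eadd (B (i # j # word q) g) (esmul k (B (word q) g'))) \<in> \<I>"
        using swap_letters[OF i(1) less2.prems(1) g set_word_subset] by blast
      have qM: "(q, g) \<in> Mon n l" "(q, g') \<in> Mon n l" unfolding q_def using Mon_dec less2.prems(2) g g' by auto
      have S1: "spanned D (B (word q) g')"
        using spanned_mono[of "(q, g')" D] qM dq less2.prems(3) by (simp add: mono_eq_B_word MonLe_def)
      have ih: "spanned (deg p) (B (j # word q) g)" using less2.hyps[OF sq less2.prems(1) qM(1)] dq by simp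
      have "spanned D (mul (X i) (B (j # word q) g))"
      proof (rule spanned_mul_X[OF ih _ \<open>i < n\<close>])
        show "B (j # word q) g \<in> \<A>" using set_word_subset[of q] less2.prems(1) g by (auto intro!: B_Alg)
        fix m assume "m \<in> MonLe (deg p)"
        thus "spanned D (B (i # word (fst m)) (snd m))"
          using less.IH[OF i(1) \<open>i < n\<close>, of "fst m" "snd m" D] less2.prems(3) by (auto simp: MonLe_def)
      qed
      hence "spanned D (eadd (B (i # j # word q) g) (esmul k (B (word q) g')))"
        using S1 by (intro spanned_eadd spanned_esmul) (simp_all add: mul_X_B)
      thus ?thesis unfolding wp using spanned_cong sw by blast
    qed
  qed
qed

lemma spanned_B: "g \<in> G \<Longrightarrow> set w \<subseteq> {..<n} \<Longrightarrow> length w \<le> D \<Longrightarrow> spanned D (B w g)"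
proof (induction w arbitrary: g D)
  case Nil
  have "word (\<lambda>_. 0) = []" by (simp add: word_def)
  moreover have "(\<lambda>_. 0, g) \<in> MonLe D" using Nil by (simp add: MonLe_def Mon_def deg_def)
  ultimately show ?case using spanned_mono[of "(\<lambda>_. 0, g)" D] by (simp add: mono_eq_B_word)
next
  case (Cons j w)
  have ih: "spanned (length w) (B w g)" using Cons by simp
  have "spanned D (mul (X j) (B w g))"
  proof (rule spanned_mul_X[OF ih])
    show "B w g \<in> \<A>" using Cons.prems by (auto intro!: B_Alg)
    show "j < n" using Cons.prems by simp
    fix m assume m: "m \<in> MonLe (length w)"
    obtain mp mg where mm: "m = (mp, mg)" by fastforce
    show "spanned D (B (j # word (fst m)) (snd m))"
      using spanned_X_word[of j mp mg D] m mm Cons.prems by (auto simp: MonLe_def)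
  qed
  thus ?case by (simp add: mul_X_B)
qed

lemma spanned_Alg: assumes "a \<in> \<A>" "\<forall>x\<in>supp a. length (fst x) \<le> D" shows "spanned D a"
proof -
  have fa: "finite (supp a)" using assms by (simp add: Alg_iff)
  have "a = (\<lambda>x. \<Sum>y\<in>supp a. a y * B (fst y) (snd y) x)"
  proof
    fix x
    have "(\<Sum>y\<in>supp a. a y * B (fst y) (snd y) x) = (\<Sum>y\<in>supp a. if y = x then a x else 0)"
      by (intro sum.cong) (auto simp: B_def)
    also have "\<dots> = a x" using fa by (simp add: supp_def)
    finally show "a x = (\<Sum>y\<in>supp a. a y * B (fst y) (snd y) x)" by simp
  qed
  moreover have "spanned D (\<lambda>x. \<Sum>y\<in>supp a. a y * B (fst y) (snd y) x)"
    using assms by (intro spanned_sum[OF fa] ballI spanned_B) (auto simp: Alg_iff)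
  ultimately show ?thesis by simp
qed

section \<open>The basis and the associated graded algebra\<close>

lemma monomials_basis_holds: "monomials_basis n l \<zeta> t"
  unfolding monomials_basis_def
proof (intro conjI ballI allI impI)
  fix a assume a: "a \<in> \<A>"
  let ?D = "\<Sum>x\<in>supp a. length (fst x)"
  have "spanned ?D a" using a by (intro spanned_Alg) (auto intro: member_le_sum simp: Alg_iff)
  then obtain c where "esub a (lincomb n (MonLe ?D) c) \<in> \<I>" unfolding spanned_def by blast
  moreover have "MonLe ?D \<subseteq> Mon n l" by (auto simp: MonLe_def)
  ultimately show "\<exists>S c. finite S \<and> S \<subseteq> Mon n l \<and> esub a (lincomb n S c) \<in> \<I>"
    using finite_MonLe by blast
qed (use lincomb_Ideal_coeff_zero in blast)

lemma MonDeg_eq: "MonDeg n l d = {m \<in> MonLe d. deg (fst m) = d}"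
  by (auto simp: MonDeg_def MonLe_def deg_def)

lemma gr_map_surjective: assumes "a \<in> Fle n l d"
  shows "\<exists>S c b. finite S \<and> S \<subseteq> MonDeg n l d \<and> b \<in> Flt n l d \<and> esub (esub a (lincomb n S c)) b \<in> \<I>"
proof -
  have "a \<in> \<A>" "\<forall>x\<in>supp a. length (fst x) \<le> d" using assms by (auto simp: Fle_def supp_def)
  then obtain c where c: "esub a (lincomb n (MonLe d) c) \<in> \<I>" using spanned_Alg unfolding spanned_def by blast
  let ?S = "MonDeg n l d" and ?T = "MonLe d - MonDeg n l d"
  let ?b = "lincomb n ?T c"
  have fT: "finite ?T" using finite_MonLe by simp
  have un: "MonLe d = ?S \<union> ?T" "?S \<inter> ?T = {}" unfolding MonDeg_eq by auto
  have "lincomb n (MonLe d) c = (\<lambda>x. lincomb n ?S c x + ?b x)"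
    unfolding lincomb_def by (subst un(1), rule ext, rule sum.union_disjoint) (use finite_MonDeg fT un in auto)
  hence "esub (esub a (lincomb n ?S c)) ?b = esub a (lincomb n (MonLe d) c)"
    by (auto simp: esub_def)
  moreover have "length (fst x) < d" if x: "x \<in> supp ?b" for x
  proof -
    obtain m where m: "m \<in> ?T" "x = (word (fst m), snd m)" using lincomb_supp[OF x] by blast
    have "deg (fst m) < d" using m(1) unfolding MonDeg_eq by (auto simp: MonLe_def)
    thus ?thesis using m(2) by (simp add: length_word)
  qed
  moreover have "?b \<in> \<A>" using lincomb_Alg[OF fT] by (auto simp: MonLe_def)
  ultimately have "?b \<in> Flt n l d" unfolding Flt_def supp_def by fastforce
  moreover have "esub (esub a (lincomb n ?S c)) ?b \<in> \<I>"
    using \<open>esub (esub a (lincomb n ?S c)) ?b = _\<close> c by simp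
  ultimately show ?thesis using finite_MonDeg by blast
qed

lemma gr_map_injective:
  assumes S: "finite S" "S \<subseteq> MonDeg n l d" and b: "b \<in> Flt n l d"
    and I: "esub (lincomb n S c) b \<in> \<I>" and m: "m \<in> S"
  shows "c m = 0"
proof -
  have SM: "S \<subseteq> Mon n l" using S by (auto simp: MonDeg_def)
  have bA: "b \<in> \<A>" and bl: "\<forall>x. b x \<noteq> 0 \<longrightarrow> length (fst x) < d" using b by (auto simp: Flt_def)
  show "c m = 0"
  proof (cases "d = 0")
    case True
    hence "esub (lincomb n S c) b = lincomb n S c" using bl by (auto simp: esub_def)
    thus ?thesis using I lincomb_Ideal_coeff_zero[OF S(1) SM _ m] by simp
  next
    case False
    have "\<forall>x\<in>supp b. length (fst x) \<le> d - 1" using bl False by (auto simp: supp_def)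
    then obtain c' where c': "esub b (lincomb n (MonLe (d - 1)) c') \<in> \<I>"
      using spanned_Alg[OF bA] unfolding spanned_def by blast
    let ?U = "S \<union> MonLe (d - 1)"
    let ?c = "\<lambda>u. if u \<in> S then c u else - c' u"
    have disj: "S \<inter> MonLe (d - 1) = {}" using S False by (auto simp: MonDeg_def MonLe_def deg_def)
    have "lincomb n ?U ?c = esub (lincomb n S c) (lincomb n (MonLe (d - 1)) c')"
    proof
      fix x
      have "lincomb n ?U ?c x = (\<Sum>u\<in>S. ?c u * mono n u x) + (\<Sum>u\<in>MonLe (d - 1). ?c u * mono n u x)"
        unfolding lincomb_def by (rule sum.union_disjoint) (use S finite_MonLe disj in auto)
      also have "\<dots> = lincomb n S c x - lincomb n (MonLe (d - 1)) c' x"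
        unfolding lincomb_def using disj by (auto simp: sum_negf[symmetric] intro!: arg_cong2[where f="(+)"] sum.cong)
      finally show "lincomb n ?U ?c x = esub (lincomb n S c) (lincomb n (MonLe (d - 1)) c') x"
        by (simp add: esub_def)
    qed
    also have "\<dots> = eadd (esub (lincomb n S c) b) (esub b (lincomb n (MonLe (d - 1)) c'))"
      by (auto simp: esub_def eadd_def)
    finally have "lincomb n ?U ?c \<in> \<I>" using I c' Ideal.add by simp
    moreover have "finite ?U" "?U \<subseteq> Mon n l" using S SM finite_MonLe by (auto simp: MonLe_def)
    ultimately have "?c m = 0" using lincomb_Ideal_coeff_zero m by blast
    thus ?thesis using m by simp
  qed
qed

lemma gr_map_iso_holds: "gr_map_iso n l \<zeta> t"
  unfolding gr_map_iso_def using gr_map_surjective gr_map_injective by blast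

end

theorem mainTheorem2:
  fixes n l :: nat and \<zeta> :: complex and t :: "nat \<Rightarrow> complex"
  assumes "n \<ge> 3" and "l \<ge> 2"
    and "\<zeta> ^ l = 1" and "\<forall>k. 0 < k \<and> k < l \<longrightarrow> \<zeta> ^ k \<noteq> 1"
  shows "monomials_basis n l \<zeta> t \<and> gr_map_iso n l \<zeta> t"
proof -
  interpret pbw_algebra l \<zeta> n t using assms by unfold_locales auto
  show ?thesis using monomials_basis_holds gr_map_iso_holds by simp
qed

end
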